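(* Let $\mathfrak g$ be a Lie algebra with a classical $r$-matrix $R$. For every $A\in\mathcal U(\mathfrak g)$ there is a unique $A'\in\mathcal U(\mathfrak g_R)$ such that $$A=R_+(A'_{(1)})\,S_{\mathfrak g}\big(R_-(A'_{(2)})\big),$$ where $\Delta_{\mathfrak g_R}(A')=A'_{(1)}\otimes A'_{(2)}$ in Sweedler notation.
   Context: All vector spaces are finite dimensional over $\mathbb K=\mathbb R$ or $\mathbb C$. Let $\mathfrak g=(V,[\cdot,\cdot])$ be a Lie algebra. A classical $r$-matrix is a linear map $R:V\to V$ satisfying $[Rx,Ry]=R([Rx,y]+[x,Ry])-[x,y]$ for all $x,y$. Then $[x,y]_R:=\frac12([Rx,y]+[x,Ry])$ is a Lie bracket; $\mathfrak g_R:=(V,[\cdot,\cdot]_R)$. The maps $R_\pm:=\frac12(R\pm\mathrm{id})$ are Lie algebra morphisms $\mathfrak g_R\to\mathfrak g$, extended (same notation) to unital algebra morphisms $\mathcal U(\mathfrak g_R)\to\mathcal U(\mathfrak g)$. $\Delta_{\mathfrak g_R}$ is the coproduct of $\mathcal U(\mathfrak g_R)$ (elements of $V$ primitive); $S_{\mathfrak g}$ is the antipode of $\mathcal U(\mathfrak g)$, $S_{\mathfrak g}(x_1\cdots x_n)=(-1)^nx_n\cdots x_1$. *)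

theory Defs
  imports Complex_Main
begin

text \<open>
  The Lie algebra is V = ('i => 'k) for a finite basis index type 'i
  (so dim V = CARD('i), arbitrary), with a bilinear Lie bracket br.
  The tensor algebra T(V) is realised as the free associative algebra on the basis:
  finitely supported functions 'i list => 'k (coefficient of each basis word).
  U(g) = T(V) / I_g, with I_g the two-sided ideal generated by x y - y x - [x,y];
  elements of U(g) are represented by elements of T(V), equality in U(g) is
  congruence modulo I_g.
\<close>

definition vbasis :: "'i \<Rightarrow> ('i \<Rightarrow> 'k::comm_ring_1)" where
  "vbasis i = (\<lambda>j. if j = i then 1 else 0)"

definition klinear :: "(('i \<Rightarrow> 'k::comm_ring_1) \<Rightarrow> ('j \<Rightarrow> 'k)) \<Rightarrow> bool" where
  "klinear f \<longleftrightarrow> (\<forall>x y. f (\<lambda>i. x i + y i) = (\<lambda>j. f x j + f y j)) \<and>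
                  (\<forall>c x. f (\<lambda>i. c * x i) = (\<lambda>j. c * f x j))"

definition lie_bracket ::
  "(('i \<Rightarrow> 'k::comm_ring_1) \<Rightarrow> ('i \<Rightarrow> 'k) \<Rightarrow> ('i \<Rightarrow> 'k)) \<Rightarrow> bool" where
  "lie_bracket br \<longleftrightarrow>
     (\<forall>x. klinear (br x)) \<and> (\<forall>y. klinear (\<lambda>x. br x y)) \<and>
     (\<forall>x. br x x = (\<lambda>_. 0)) \<and>
     (\<forall>x y z. (\<lambda>i. br x (br y z) i + br y (br z x) i + br z (br x y) i) = (\<lambda>_. 0))"

definition classical_r_matrix ::
  "(('i \<Rightarrow> 'k::comm_ring_1) \<Rightarrow> ('i \<Rightarrow> 'k) \<Rightarrow> ('i \<Rightarrow> 'k)) \<Rightarrow> (('i \<Rightarrow> 'k) \<Rightarrow> ('i \<Rightarrow> 'k)) \<Rightarrow> bool" where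
  "classical_r_matrix br R \<longleftrightarrow> klinear R \<and>
     (\<forall>x y. br (R x) (R y) =
        (\<lambda>i. R (\<lambda>j. br (R x) y j + br x (R y) j) i - br x y i))"

definition bracket_R where
  "bracket_R br R x y = (\<lambda>i. (br (R x) y i + br x (R y) i) / (2::'k::field))"

definition R_plus where "R_plus R x = (\<lambda>i. (R x i + x i) / (2::'k::field))"
definition R_minus where "R_minus R x = (\<lambda>i. (R x i - x i) / (2::'k::field))"

definition fsupp :: "('i list \<Rightarrow> 'k::zero) \<Rightarrow> bool" where
  "fsupp p \<longleftrightarrow> finite {w. p w \<noteq> 0}"

definition fa_one :: "'i list \<Rightarrow> 'k::comm_ring_1" where
  "fa_one = (\<lambda>w. if w = [] then 1 else 0)"

definition fa_add :: "('i list \<Rightarrow> 'k::comm_ring_1) \<Rightarrow> ('i list \<Rightarrow> 'k) \<Rightarrow> ('i list \<Rightarrow> 'k)" where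
  "fa_add p q = (\<lambda>w. p w + q w)"

definition fa_diff :: "('i list \<Rightarrow> 'k::comm_ring_1) \<Rightarrow> ('i list \<Rightarrow> 'k) \<Rightarrow> ('i list \<Rightarrow> 'k)" where
  "fa_diff p q = (\<lambda>w. p w - q w)"

definition fa_mult :: "('i list \<Rightarrow> 'k::comm_ring_1) \<Rightarrow> ('i list \<Rightarrow> 'k) \<Rightarrow> ('i list \<Rightarrow> 'k)" where
  "fa_mult p q = (\<lambda>w. \<Sum>k\<le>length w. p (take k w) * q (drop k w))"

definition fa_emb :: "('i \<Rightarrow> 'k::comm_ring_1) \<Rightarrow> ('i list \<Rightarrow> 'k)" where
  "fa_emb v = (\<lambda>w. case w of [i] \<Rightarrow> v i | _ \<Rightarrow> 0)"

inductive_set fa_ideal :: "('i list \<Rightarrow> 'k::comm_ring_1) set \<Rightarrow> ('i list \<Rightarrow> 'k) set"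
  for G where
  zero: "(\<lambda>_. 0) \<in> fa_ideal G"
| gen: "g \<in> G \<Longrightarrow> fsupp a \<Longrightarrow> fsupp b \<Longrightarrow> fa_mult (fa_mult a g) b \<in> fa_ideal G"
| add: "p \<in> fa_ideal G \<Longrightarrow> q \<in> fa_ideal G \<Longrightarrow> fa_add p q \<in> fa_ideal G"

definition lie_rel :: "(('i \<Rightarrow> 'k::comm_ring_1) \<Rightarrow> ('i \<Rightarrow> 'k) \<Rightarrow> ('i \<Rightarrow> 'k)) \<Rightarrow> ('i list \<Rightarrow> 'k) set" where
  "lie_rel br = {fa_diff (fa_diff (fa_mult (fa_emb x) (fa_emb y)) (fa_mult (fa_emb y) (fa_emb x)))
                    (fa_emb (br x y)) | x y. True}"

definition ueq :: "(('i \<Rightarrow> 'k::comm_ring_1) \<Rightarrow> ('i \<Rightarrow> 'k) \<Rightarrow> ('i \<Rightarrow> 'k)) \<Rightarrow> ('i list \<Rightarrow> 'k) \<Rightarrow> ('i list \<Rightarrow> 'k) \<Rightarrow> bool" where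
  "ueq br p q \<longleftrightarrow> fa_diff p q \<in> fa_ideal (lie_rel br)"

fun word_hom :: "(('i \<Rightarrow> 'k::comm_ring_1) \<Rightarrow> ('i \<Rightarrow> 'k)) \<Rightarrow> 'i list \<Rightarrow> ('i list \<Rightarrow> 'k)" where
  "word_hom f [] = fa_one"
| "word_hom f (i # w) = fa_mult (fa_emb (f (vbasis i))) (word_hom f w)"

definition antipode :: "('i list \<Rightarrow> 'k::comm_ring_1) \<Rightarrow> ('i list \<Rightarrow> 'k)" where
  "antipode p = (\<lambda>u. (-1) ^ length u * p (rev u))"

text \<open>The map A' |-> R_+(A'_(1)) S_g(R_-(A'_(2))), where the coproduct of a basis word
  w (elements of V primitive) is  Delta(w) = sum over S subset of positions of w|_S (x) w|_{S^c};
  extended linearly.\<close>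
definition factor_map :: "(('i \<Rightarrow> 'k::field) \<Rightarrow> ('i \<Rightarrow> 'k)) \<Rightarrow> ('i list \<Rightarrow> 'k) \<Rightarrow> ('i list \<Rightarrow> 'k)" where
  "factor_map R p = (\<lambda>u. \<Sum>w\<in>{w. p w \<noteq> 0}. p w *
      (\<Sum>S\<in>Pow {..<length w}.
         fa_mult (word_hom (R_plus R) (nths w S))
                 (antipode (word_hom (R_minus R) (nths w ({..<length w} - S)))) u))"

end

theory Submission
  imports Defs "HOL-Library.Poly_Mapping" "HOL-Library.Countable" "HOL-Library.Function_Algebras"
begin

text \<open>
  The map \<open>A' \<mapsto> R\<^sub>+(A'\<^sub>(\<^sub>1\<^sub>)) S(R\<^sub>-(A'\<^sub>(\<^sub>2\<^sub>)))\<close> is the orbit map \<open>A' \<mapsto> A' \<cdot> 1\<close> of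
  the action \<open>x \<cdot> Q = R\<^sub>+(x) Q - Q R\<^sub>-(x)\<close> of \<open>g\<^sub>R\<close> on \<open>U(g)\<close>.  Since \<open>R\<^sub>\<plusminus>\<close> are Lie
  algebra morphisms \<open>g\<^sub>R \<rightarrow> g\<close>, this action respects the relations of \<open>U(g\<^sub>R)\<close>, so the
  map descends to \<open>U(g\<^sub>R) \<rightarrow> U(g)\<close>.  Since \<open>R\<^sub>+ - R\<^sub>- = id\<close>, it sends a word to the same
  word plus terms of lower degree: it is filtered with the identity as associated graded map.
  Sorted words span \<open>U(g\<^sub>R)\<close> and are linearly independent in \<open>U(g)\<close>
  (Poincar\'e--Birkhoff--Witt; independence via the action of \<open>T(g)\<close> on the free module on
  sorted words), so induction on the degree gives bijectivity.
\<close>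

section \<open>The free associative algebra on the basis\<close>

text \<open>With concatenation as addition on words, the convolution product of \<open>'i list \<Rightarrow>\<^sub>0 'k\<close>
  is the product of the free associative algebra.\<close>

instantiation list :: (type) monoid_add
begin
definition zero_list_def: "zero_list = []"
definition plus_list_def: "plus_list = (@)"
instance by standard (auto simp: zero_list_def plus_list_def)
end

abbreviation lookup where "lookup \<equiv> poly_mapping.lookup"
abbreviation keys where "keys \<equiv> Poly_Mapping.keys"
abbreviation single where "single \<equiv> Poly_Mapping.single"
abbreviation word :: "'i list \<Rightarrow> ('i list \<Rightarrow>\<^sub>0 'k::zero_neq_one)" where
  "word w \<equiv> single w 1"

lemma Nil_eq_zero: "[] = 0"
  by (simp add: zero_list_def)

lemma word_Nil: "word [] = (1 :: 'i list \<Rightarrow>\<^sub>0 'k::comm_ring_1)"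
  by (simp add: Nil_eq_zero)

lemma single_mult_single: "single u a * single v b = single (u @ v) (a * b)"
  by (simp add: mult_single plus_list_def)

lemma update_eq_single_add:
  "a \<notin> keys f \<Longrightarrow> Poly_Mapping.update a b f = single a b + f"
  by (rule poly_mapping_eqI) (auto simp: lookup_update lookup_add lookup_single in_keys_iff when_def)

lemma poly_mapping_single_induct [case_names zero single]:
  assumes "Q 0" "\<And>P w c. Q P \<Longrightarrow> Q (single w c + P)"
  shows "Q P"
  by (induct P rule: update_induct) (auto simp: update_eq_single_add assms)

lemma additive_eqI:
  fixes F G :: "('a::monoid_add \<Rightarrow>\<^sub>0 'k::comm_ring_1) \<Rightarrow> 'b::ab_group_add"
  assumes "\<And>P Q. F (P + Q) = F P + F Q" "\<And>P Q. G (P + Q) = G P + G Q"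
    and "\<And>w c. F (single w c) = G (single w c)"
  shows "F P = G P"
proof (induct P rule: poly_mapping_single_induct)
  case zero
  have "F 0 = 0" "G 0 = 0" using assms(1)[of 0 0] assms(2)[of 0 0] by simp_all
  then show ?case by simp
qed (simp add: assms)

definition scalar :: "'k \<Rightarrow> ('i list \<Rightarrow>\<^sub>0 'k::comm_ring_1)" where
  "scalar c = single [] c"

lemma scalar_0 [simp]: "scalar 0 = 0"
  by (simp add: scalar_def)
lemma scalar_1 [simp]: "scalar 1 = 1"
  by (simp add: scalar_def Nil_eq_zero)
lemma scalar_mult: "scalar a * scalar b = scalar (a * b)"
  by (simp add: scalar_def single_mult_single)
lemma scalar_add: "scalar (a + b) = scalar a + scalar b"
  by (simp add: scalar_def single_add)
lemma scalar_uminus: "scalar (- a) = - scalar a"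
  by (simp add: scalar_def single_uminus)
lemma scalar_mult_single: "scalar c * single w d = single w (c * d)"
  by (simp add: scalar_def single_mult_single)
lemma single_mult_scalar: "single w d * scalar c = single w (d * c)"
  by (simp add: scalar_def single_mult_single)

lemma scalar_commute: "scalar c * P = P * scalar c"
  by (induct P rule: poly_mapping_single_induct)
    (auto simp: distrib_left distrib_right scalar_mult_single single_mult_scalar mult.commute)

lemma lookup_scalar_mult [simp]: "lookup (scalar c * P) w = c * lookup P w"
  by (induct P rule: poly_mapping_single_induct)
    (auto simp: distrib_left scalar_mult_single lookup_add lookup_single when_def)

lemma keys_scalar_mult: "keys (scalar c * P) \<subseteq> keys P"
  by (auto simp: in_keys_iff)

lemma scalar_mult_scalar_mult: "scalar a * (scalar b * P) = scalar (a * b) * P"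
  by (simp add: scalar_mult mult.assoc[symmetric])

lemma mult_scalar_left_commute: "P * (scalar c * Q) = scalar c * (P * Q)"
  by (metis mult.assoc scalar_commute)

definition lin_ext :: "('i list \<Rightarrow> ('j list \<Rightarrow>\<^sub>0 'k::comm_ring_1)) \<Rightarrow> ('i list \<Rightarrow>\<^sub>0 'k) \<Rightarrow> ('j list \<Rightarrow>\<^sub>0 'k)" where
  "lin_ext f P = (\<Sum>w\<in>keys P. scalar (lookup P w) * f w)"

lemma lin_ext_superset:
  "finite S \<Longrightarrow> keys P \<subseteq> S \<Longrightarrow> lin_ext f P = (\<Sum>w\<in>S. scalar (lookup P w) * f w)"
  unfolding lin_ext_def by (rule sum.mono_neutral_left) (auto simp: in_keys_iff)

lemma lin_ext_add: "lin_ext f (P + Q) = lin_ext f P + lin_ext f Q"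
  using keys_add[of P Q]
  by (simp add: lin_ext_superset[of "keys P \<union> keys Q"] lookup_add scalar_add distrib_right sum.distrib)

lemma lin_ext_zero [simp]: "lin_ext f 0 = 0"
  by (simp add: lin_ext_def)

lemma lin_ext_single [simp]: "lin_ext f (single w c) = scalar c * f w"
  by (cases "c = 0") (auto simp: lin_ext_def)

lemma lin_ext_scalar: "lin_ext f (scalar c * P) = scalar c * lin_ext f P"
  by (induct P rule: poly_mapping_single_induct)
    (auto simp: lin_ext_add distrib_left scalar_mult_single scalar_mult mult.assoc[symmetric])

lemma lin_ext_diff: "lin_ext f (P - Q) = lin_ext f P - lin_ext f Q"
  using lin_ext_add[of f P "- Q"] lin_ext_scalar[of f "- 1" Q] by (simp add: scalar_uminus)

lemma lin_ext_sum: "lin_ext f (sum g S) = (\<Sum>s\<in>S. lin_ext f (g s))"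
  by (induct S rule: infinite_finite_induct) (auto simp: lin_ext_add)

lemma lin_ext_word [simp]: "lin_ext word P = P"
  by (induct P rule: poly_mapping_single_induct) (auto simp: lin_ext_add scalar_mult_single)

lemma lin_ext_cong: "(\<And>w. w \<in> keys P \<Longrightarrow> f w = g w) \<Longrightarrow> lin_ext f P = lin_ext g P"
  by (simp add: lin_ext_def)

lemma lin_ext_fun_diff: "lin_ext (\<lambda>w. f w - g w) P = lin_ext f P - lin_ext g P"
  by (simp add: lin_ext_def right_diff_distrib sum_subtractf)

lemma sum_closed:
  assumes "Q 0" "\<And>a b. Q a \<Longrightarrow> Q b \<Longrightarrow> Q (a + b)" "\<And>s. s \<in> S \<Longrightarrow> Q (g s)"
  shows "Q (sum g S)"
  using assms(3) by (induct S rule: infinite_finite_induct) (auto intro: assms(1,2))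

lemma lin_ext_closed:
  assumes "Q 0" "\<And>P P'. Q P \<Longrightarrow> Q P' \<Longrightarrow> Q (P + P')" "\<And>c P. Q P \<Longrightarrow> Q (scalar c * P)"
    and "\<And>w. w \<in> keys P \<Longrightarrow> Q (f w)"
  shows "Q (lin_ext f P)"
  unfolding lin_ext_def by (rule sum_closed[where Q = Q]) (use assms in auto)

definition degree_le :: "nat \<Rightarrow> ('i list \<Rightarrow>\<^sub>0 'k::zero) \<Rightarrow> bool" where
  "degree_le n P \<longleftrightarrow> (\<forall>w\<in>keys P. length w \<le> n)"

definition degree_lt :: "nat \<Rightarrow> ('i list \<Rightarrow>\<^sub>0 'k::zero) \<Rightarrow> bool" where
  "degree_lt n P \<longleftrightarrow> (\<forall>w\<in>keys P. length w < n)"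

lemma degree_le_exists: "\<exists>n. degree_le n P"
  by (rule exI[of _ "Max (length ` keys P)"]) (auto simp: degree_le_def)

lemma degree_le_0 [simp]: "degree_le n 0"
  by (simp add: degree_le_def)
lemma degree_le_add: "degree_le n P \<Longrightarrow> degree_le n Q \<Longrightarrow> degree_le n (P + Q)"
  using keys_add[of P Q] by (auto simp: degree_le_def)
lemma degree_le_uminus [simp]: "degree_le n (- P) = degree_le n (P::'i list \<Rightarrow>\<^sub>0 'k::ab_group_add)"
  by (simp add: degree_le_def)
lemma degree_le_diff:
  "degree_le n P \<Longrightarrow> degree_le n Q \<Longrightarrow> degree_le n (P - (Q::'i list \<Rightarrow>\<^sub>0 'k::ab_group_add))"
  using degree_le_add[of n P "- Q"] by simp
lemma degree_le_mono: "degree_le m P \<Longrightarrow> m \<le> n \<Longrightarrow> degree_le n P"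
  by (auto simp: degree_le_def)
lemma degree_le_single: "length w \<le> n \<Longrightarrow> degree_le n (single w c)"
  by (auto simp: degree_le_def)
lemma degree_le_mult: "degree_le m P \<Longrightarrow> degree_le n Q \<Longrightarrow> degree_le (m + n) (P * Q)"
  using keys_mult[of P Q] by (fastforce simp: degree_le_def plus_list_def)
lemma degree_le_scalar: "degree_le n P \<Longrightarrow> degree_le n (scalar c * P)"
  using keys_scalar_mult by (fastforce simp: degree_le_def)
lemma degree_le_lin_ext: "(\<And>w. w \<in> keys P \<Longrightarrow> degree_le n (f w)) \<Longrightarrow> degree_le n (lin_ext f P)"
  by (rule lin_ext_closed) (auto intro: degree_le_add degree_le_scalar)

lemma degree_lt_Suc: "degree_lt (Suc n) P \<longleftrightarrow> degree_le n P"
  by (auto simp: degree_lt_def degree_le_def)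
lemma degree_lt_0: "degree_lt 0 P \<longleftrightarrow> P = 0"
  by (auto simp: degree_lt_def)
lemma degree_lt_zero [simp]: "degree_lt n 0"
  by (simp add: degree_lt_def)
lemma degree_lt_mono: "degree_lt m P \<Longrightarrow> m \<le> n \<Longrightarrow> degree_lt n P"
  by (auto simp: degree_lt_def)
lemma degree_lt_add: "degree_lt n P \<Longrightarrow> degree_lt n Q \<Longrightarrow> degree_lt n (P + Q)"
  using keys_add[of P Q] by (auto simp: degree_lt_def)
lemma degree_lt_word_mult: "degree_lt n P \<Longrightarrow> degree_lt (Suc n) (word [i] * P)"
  using keys_mult[of "word [i]" P] by (fastforce simp: degree_lt_def plus_list_def)
lemma degree_lt_scalar: "degree_lt n P \<Longrightarrow> degree_lt n (scalar c * P)"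
  using keys_scalar_mult by (fastforce simp: degree_lt_def)
lemma degree_lt_lin_ext: "(\<And>w. w \<in> keys P \<Longrightarrow> degree_lt n (f w)) \<Longrightarrow> degree_lt n (lin_ext f P)"
  by (rule lin_ext_closed) (auto intro: degree_lt_add degree_lt_scalar)

inductive_set ideal_gen :: "'a::ring_1 set \<Rightarrow> 'a set" for G where
  zero: "0 \<in> ideal_gen G"
| gen: "g \<in> G \<Longrightarrow> a * g * b \<in> ideal_gen G"
| add: "p \<in> ideal_gen G \<Longrightarrow> q \<in> ideal_gen G \<Longrightarrow> p + q \<in> ideal_gen G"

lemma ideal_gen_mult_left: "p \<in> ideal_gen G \<Longrightarrow> c * p \<in> ideal_gen G"
  by (induct rule: ideal_gen.induct)
    (auto simp: distrib_left mult.assoc[symmetric] intro: ideal_gen.intros)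

lemma ideal_gen_mult_right: "p \<in> ideal_gen G \<Longrightarrow> p * c \<in> ideal_gen G"
proof (induct rule: ideal_gen.induct)
  case (gen g a b)
  then show ?case using ideal_gen.gen[of g G a "b * c"] by (simp add: mult.assoc)
qed (auto simp: distrib_right intro: ideal_gen.intros)

lemma ideal_gen_uminus: "p \<in> ideal_gen G \<Longrightarrow> - p \<in> ideal_gen G"
  using ideal_gen_mult_left[of p G "- 1"] by simp

lemma ideal_gen_diff: "p \<in> ideal_gen G \<Longrightarrow> q \<in> ideal_gen G \<Longrightarrow> p - q \<in> ideal_gen G"
  using ideal_gen.add[of p G "- q"] ideal_gen_uminus by fastforce

lemma ideal_gen_lin_ext:
  "(\<And>w. w \<in> keys P \<Longrightarrow> f w \<in> ideal_gen G) \<Longrightarrow> lin_ext f P \<in> ideal_gen G"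
  by (rule lin_ext_closed[where Q = "\<lambda>P. P \<in> ideal_gen G"])
    (auto intro: ideal_gen.intros ideal_gen_mult_left)

lemma klinear_add: "klinear f \<Longrightarrow> f (x + y) = f x + f y"
  by (simp add: klinear_def plus_fun_def)
lemma klinear_scale: "klinear f \<Longrightarrow> f (\<lambda>i. c * x i) = (\<lambda>j. c * f x j)"
  by (simp add: klinear_def)
lemma klinear_zero: "klinear f \<Longrightarrow> f 0 = 0"
  using klinear_add[of f 0 0] by simp
lemma klinear_uminus: "klinear f \<Longrightarrow> f (- x) = - f x"
  using klinear_add[of f x "- x"] klinear_zero[of f] by (simp add: eq_neg_iff_add_eq_0 add.commute)
lemma klinear_diff: "klinear f \<Longrightarrow> f (x - y) = f x - f y"
  using klinear_add[of f x "- y"] klinear_uminus[of f y] by simp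
lemma klinear_sum: "klinear f \<Longrightarrow> f (sum g S) = (\<Sum>s\<in>S. f (g s))"
  by (induct S rule: infinite_finite_induct) (auto simp: klinear_zero klinear_add)

lemma sum_fun_apply: "(sum f S) x = (\<Sum>s\<in>S. f s x)"
  by (induct S rule: infinite_finite_induct) auto

lemma vbasis_expansion: "(x::'i::finite \<Rightarrow> 'k::comm_ring_1) = (\<Sum>i\<in>UNIV. (\<lambda>j. x i * vbasis i j))"
  by (rule ext) (simp add: sum_fun_apply vbasis_def if_distrib[where f="(*) _"] cong: if_cong)

lemma klinear_expansion:
  "klinear f \<Longrightarrow> f (x::'i::finite \<Rightarrow> 'k::comm_ring_1) = (\<Sum>i\<in>UNIV. (\<lambda>j. x i * f (vbasis i) j))"
  by (subst vbasis_expansion) (simp add: klinear_sum klinear_scale)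

definition emb :: "('i::finite \<Rightarrow> 'k::comm_ring_1) \<Rightarrow> ('i list \<Rightarrow>\<^sub>0 'k)" where
  "emb v = (\<Sum>i\<in>UNIV. single [i] (v i))"

lemma emb_add: "emb (x + y) = emb x + emb y"
  by (simp add: emb_def single_add sum.distrib)
lemma emb_scale: "emb (\<lambda>i. c * x i) = scalar c * emb x"
  by (simp add: emb_def sum_distrib_left scalar_mult_single)
lemma emb_zero [simp]: "emb 0 = 0"
  by (simp add: emb_def)
lemma emb_sum: "emb (sum g S) = (\<Sum>s\<in>S. emb (g s))"
  by (induct S rule: infinite_finite_induct) (auto simp: emb_add emb_def[of "\<lambda>_. 0"] simp del: plus_fun_apply)
lemma emb_vbasis: "emb (vbasis i) = word [i]"
proof -
  have "emb (vbasis i) = (\<Sum>j\<in>UNIV. if j = i then word [i] else 0)"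
    unfolding emb_def vbasis_def by (rule sum.cong) auto
  then show ?thesis by simp
qed
lemma emb_expansion:
  fixes f :: "('i::finite \<Rightarrow> 'k::comm_ring_1) \<Rightarrow> ('i \<Rightarrow> 'k)"
  shows "klinear f \<Longrightarrow> emb (f x) = (\<Sum>i\<in>UNIV. scalar (x i) * emb (f (vbasis i)))"
  by (simp add: klinear_expansion[of f x] emb_sum emb_scale)
lemma degree_le_emb: "degree_le 1 (emb v)"
  unfolding emb_def by (rule sum_closed) (auto intro: degree_le_add degree_le_single)

lemma lie_bracket_linear_right: "lie_bracket br \<Longrightarrow> klinear (br x)"
  by (simp add: lie_bracket_def)
lemma lie_bracket_linear_left: "lie_bracket br \<Longrightarrow> klinear (\<lambda>x. br x y)"
  by (simp add: lie_bracket_def)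
lemma lie_bracket_self: "lie_bracket br \<Longrightarrow> br x x = 0"
  by (simp add: lie_bracket_def zero_fun_def)
lemma lie_bracket_antisym: "lie_bracket br \<Longrightarrow> br y x = - br x y"
proof -
  assume lb: "lie_bracket br"
  note add_l = klinear_add[OF lie_bracket_linear_left[OF lb]]
    and add_r = klinear_add[OF lie_bracket_linear_right[OF lb]]
  have "0 = br (x + y) (x + y)" by (simp add: lie_bracket_self[OF lb])
  also have "\<dots> = br x y + br y x"
    by (simp add: add_l add_r lie_bracket_self[OF lb, of x] lie_bracket_self[OF lb, of y])
  finally show ?thesis by (simp add: eq_neg_iff_add_eq_0 add.commute)
qed
lemma lie_bracket_jacobi: "lie_bracket br \<Longrightarrow> br x (br y z) + br y (br z x) + br z (br x y) = 0"
  by (simp add: lie_bracket_def fun_eq_iff plus_fun_def zero_fun_def)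

section \<open>The Poincar\'e--Birkhoff--Witt theorem\<close>

abbreviation idx_le :: "'i::countable \<Rightarrow> 'i \<Rightarrow> bool" (infix "\<preceq>" 50) where
  "i \<preceq> j \<equiv> to_nat i \<le> to_nat j"
abbreviation idx_less :: "'i::countable \<Rightarrow> 'i \<Rightarrow> bool" (infix "\<prec>" 50) where
  "i \<prec> j \<equiv> to_nat i < to_nat j"

definition sorted_word :: "'i::countable list \<Rightarrow> bool" where
  "sorted_word w \<longleftrightarrow> sorted (map to_nat w)"

abbreviation insort_word :: "'i::countable \<Rightarrow> 'i list \<Rightarrow> 'i list" where
  "insort_word i w \<equiv> insort_key to_nat i w"

definition sorted_keys :: "('i::countable list \<Rightarrow>\<^sub>0 'k::zero) \<Rightarrow> bool" where
  "sorted_keys P \<longleftrightarrow> (\<forall>v\<in>keys P. sorted_word v)"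

lemma sorted_word_Nil [simp]: "sorted_word []"
  by (simp add: sorted_word_def)
lemma sorted_word_Cons: "sorted_word (j # w) \<longleftrightarrow> sorted_word w \<and> (\<forall>x\<in>set w. j \<preceq> x)"
  by (auto simp: sorted_word_def)
lemma sorted_word_Cons_hd: "sorted_word (j # w) \<longleftrightarrow> sorted_word w \<and> (w = [] \<or> j \<preceq> hd w)"
  by (cases w) (auto simp: sorted_word_def)
lemma sorted_word_insort: "sorted_word w \<Longrightarrow> sorted_word (insort_word i w)"
  by (simp add: sorted_word_def sorted_insort_key)
lemma length_insort_word [simp]: "length (insort_word i w) = Suc (length w)"
  by (simp add: length_insort)

lemma sorted_keys_0 [simp]: "sorted_keys 0"
  by (simp add: sorted_keys_def)
lemma sorted_keys_add: "sorted_keys P \<Longrightarrow> sorted_keys Q \<Longrightarrow> sorted_keys (P + Q)"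
  using keys_add[of P Q] by (auto simp: sorted_keys_def)
lemma sorted_keys_uminus [simp]:
  "sorted_keys (- P) = sorted_keys (P::'i::countable list \<Rightarrow>\<^sub>0 'k::ab_group_add)"
  by (simp add: sorted_keys_def)
lemma sorted_keys_diff:
  "sorted_keys P \<Longrightarrow> sorted_keys Q \<Longrightarrow> sorted_keys (P - (Q::'i::countable list \<Rightarrow>\<^sub>0 'k::ab_group_add))"
  using sorted_keys_add[of P "- Q"] by simp
lemma sorted_keys_single: "sorted_word w \<Longrightarrow> sorted_keys (single w c)"
  by (auto simp: sorted_keys_def)
lemma sorted_keys_scalar: "sorted_keys P \<Longrightarrow> sorted_keys (scalar c * P)"
  using keys_scalar_mult by (fastforce simp: sorted_keys_def)
lemma sorted_keys_lin_ext:
  "(\<And>w. w \<in> keys P \<Longrightarrow> sorted_keys (f w)) \<Longrightarrow> sorted_keys (lin_ext f P)"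
  by (rule lin_ext_closed) (auto intro: sorted_keys_add sorted_keys_scalar)

text \<open>
  The action of \<open>T(V)\<close> on the span of sorted words that proves the independence half of the
  Poincar\'e--Birkhoff--Witt theorem.  The basis vector \<open>e\<^sub>i\<close> acts on a sorted word \<open>u\<close> by
  prepending \<open>i\<close> if \<open>i \<preceq> hd u\<close>, and otherwise, for \<open>u = j # w\<close>, by
  \<open>e\<^sub>i(e\<^sub>j w) = e\<^sub>j(e\<^sub>i w) + [e\<^sub>i, e\<^sub>j] w\<close>.  The words of \<open>e\<^sub>i w\<close> have length at most
  \<open>|u|\<close>, and the only one of length \<open>|u|\<close> is \<open>insort_word i w\<close>, on which \<open>e\<^sub>j\<close> acts by
  prepending; so the recursion is on the length, made explicit by the fuel \<open>n\<close>.
\<close>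

locale pbw_action =
  fixes br :: "('i::finite \<Rightarrow> 'k::comm_ring_1) \<Rightarrow> ('i \<Rightarrow> 'k) \<Rightarrow> ('i \<Rightarrow> 'k)"
begin

primrec act_fuel :: "nat \<Rightarrow> 'i \<Rightarrow> 'i list \<Rightarrow> ('i list \<Rightarrow>\<^sub>0 'k)" where
  "act_fuel 0 i u = word [i]"
| "act_fuel (Suc n) i u = (if length u \<le> n then act_fuel n i u else
     (case u of [] \<Rightarrow> word [i]
      | j # w \<Rightarrow> if i \<preceq> j then word (i # u) else
          lin_ext (\<lambda>v. if length v \<le> n then act_fuel n j v else word (j # v)) (act_fuel n i w)
          + (\<Sum>k\<in>UNIV. scalar (br (vbasis i) (vbasis j) k) * act_fuel n k w)))"

definition basis_act :: "'i \<Rightarrow> 'i list \<Rightarrow> ('i list \<Rightarrow>\<^sub>0 'k)" where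
  "basis_act i u = act_fuel (length u) i u"

definition act :: "'i \<Rightarrow> ('i list \<Rightarrow>\<^sub>0 'k) \<Rightarrow> ('i list \<Rightarrow>\<^sub>0 'k)" where
  "act i P = lin_ext (basis_act i) P"

definition vec_act :: "('i \<Rightarrow> 'k) \<Rightarrow> ('i list \<Rightarrow>\<^sub>0 'k) \<Rightarrow> ('i list \<Rightarrow>\<^sub>0 'k)" where
  "vec_act x P = (\<Sum>k\<in>UNIV. scalar (x k) * act k P)"

lemma act_fuel_basis_act: "length u \<le> n \<Longrightarrow> act_fuel n i u = basis_act i u"
proof (induct n arbitrary: i u)
  case (Suc n)
  then show ?case by (cases "length u \<le> n") (simp_all add: basis_act_def le_Suc_eq)
qed (simp add: basis_act_def)

lemma basis_act_head: "sorted_word (j # v) \<Longrightarrow> basis_act j v = word (j # v)"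
  by (cases v) (auto simp: basis_act_def sorted_word_Cons_hd)

lemma act_single: "act i (single w c) = scalar c * basis_act i w"
  by (simp add: act_def)
lemma act_add: "act i (P + Q) = act i P + act i Q"
  by (simp add: act_def lin_ext_add)
lemma act_scalar: "act i (scalar c * P) = scalar c * act i P"
  by (simp add: act_def lin_ext_scalar)
lemma act_diff: "act i (P - Q) = act i P - act i Q"
  by (simp add: act_def lin_ext_diff)

lemma vec_act_add: "vec_act x (P + Q) = vec_act x P + vec_act x Q"
  by (simp add: vec_act_def act_add distrib_left sum.distrib)
lemma vec_act_scalar: "vec_act x (scalar c * P) = scalar c * vec_act x P"
  by (simp add: vec_act_def act_scalar sum_distrib_left mult.assoc[symmetric] scalar_mult mult.commute)
lemma vec_act_vadd: "vec_act (x + y) P = vec_act x P + vec_act y P"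
  by (simp add: vec_act_def scalar_add distrib_right sum.distrib)
lemma vec_act_vscale: "vec_act (\<lambda>i. c * x i) P = scalar c * vec_act x P"
  by (simp add: vec_act_def sum_distrib_left scalar_mult[symmetric] mult.assoc)
lemma vec_act_zero [simp]: "vec_act x 0 = 0"
  by (simp add: vec_act_def act_def)
lemma vec_act_vzero [simp]: "vec_act 0 P = 0"
  by (simp add: vec_act_def)
lemma vec_act_vuminus: "vec_act (- x) P = - vec_act x P"
  using vec_act_vadd[of x "- x" P] by (simp add: eq_neg_iff_add_eq_0 add.commute)
lemma vec_act_vsum: "vec_act (sum g S) P = (\<Sum>s\<in>S. vec_act (g s) P)"
  by (induct S rule: infinite_finite_induct) (simp_all add: vec_act_vadd vec_act_def[of "\<lambda>_. 0"] del: plus_fun_apply)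
lemma vec_act_vbasis: "vec_act (vbasis i) P = act i P"
proof -
  have "vec_act (vbasis i) P = (\<Sum>k\<in>UNIV. if k = i then act i P else 0)"
    unfolding vec_act_def vbasis_def by (rule sum.cong) auto
  then show ?thesis by simp
qed

lemma basis_act_Cons_greater:
  assumes "j \<prec> i"
  shows "basis_act i (j # w) =
    lin_ext (\<lambda>v. if length v \<le> length w then basis_act j v else word (j # v)) (basis_act i w)
    + vec_act (br (vbasis i) (vbasis j)) (word w)"
proof -
  let ?n = "length w"
  have "basis_act i (j # w) = act_fuel (Suc ?n) i (j # w)"
    by (simp add: basis_act_def)
  also have "\<dots> = lin_ext (\<lambda>v. if length v \<le> ?n then act_fuel ?n j v else word (j # v)) (act_fuel ?n i w)
      + (\<Sum>k\<in>UNIV. scalar (br (vbasis i) (vbasis j) k) * act_fuel ?n k w)"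
    using assms by simp
  finally show ?thesis
    by (simp add: act_fuel_basis_act vec_act_def act_single cong: if_cong)
qed

definition act_normal :: "'i \<Rightarrow> 'i list \<Rightarrow> bool" where
  "act_normal i u \<longleftrightarrow>
     sorted_keys (basis_act i u) \<and> degree_le (length u) (basis_act i u - word (insort_word i u))"

lemma act_normal_degree: "act_normal i u \<Longrightarrow> degree_le (Suc (length u)) (basis_act i u)"
  unfolding act_normal_def
  using degree_le_add[OF degree_le_mono[of "length u" _ "Suc (length u)"]
      degree_le_single[of "insort_word i u" "Suc (length u)" 1]]
  by fastforce

lemma act_normal_top:
  "act_normal i u \<Longrightarrow> v \<in> keys (basis_act i u) \<Longrightarrow> length v = Suc (length u) \<Longrightarrow> v = insort_word i u"
proof (rule ccontr)
  assume "act_normal i u" "v \<in> keys (basis_act i u)" "length v = Suc (length u)" "v \<noteq> insort_word i u"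
  moreover from this have "v \<in> keys (basis_act i u - word (insort_word i u))"
    by (auto simp: in_keys_iff lookup_minus lookup_single when_def)
  ultimately show False by (auto simp: act_normal_def degree_le_def)
qed

lemma basis_act_Cons:
  assumes "sorted_word (j # w)" "j \<prec> i" "act_normal i w"
  shows "basis_act i (j # w) = act j (basis_act i w) + vec_act (br (vbasis i) (vbasis j)) (word w)"
  unfolding basis_act_Cons_greater[OF assms(2)] act_def
proof (intro arg_cong2[where f = "(+)"] lin_ext_cong refl)
  fix v assume v: "v \<in> keys (basis_act i w)"
  show "(if length v \<le> length w then basis_act j v else word (j # v)) = basis_act j v"
  proof (cases "length v \<le> length w")
    case False
    then have "v = insort_word i w"
      using act_normal_degree[OF assms(3)] v act_normal_top[OF assms(3) v]
      by (auto simp: degree_le_def)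
    moreover have "sorted_word (j # insort_word i w)"
      using assms(1,2) by (auto simp: sorted_word_Cons set_insort_key sorted_word_insort)
    ultimately show ?thesis using False basis_act_head by simp
  qed simp
qed

lemma act_normal_keys:
  assumes "\<And>v. v \<in> keys P \<Longrightarrow> act_normal j v" "degree_le n P"
  shows "degree_le (Suc n) (act j P) \<and> sorted_keys (act j P)"
  unfolding act_def
proof (intro conjI degree_le_lin_ext sorted_keys_lin_ext)
  fix v assume v: "v \<in> keys P"
  have "length v \<le> n" using assms(2) v by (simp add: degree_le_def)
  then show "degree_le (Suc n) (basis_act j v)"
    by (intro degree_le_mono[OF act_normal_degree[OF assms(1)[OF v]]]) simp
  show "sorted_keys (basis_act j v)" using assms(1)[OF v] by (simp add: act_normal_def)
qed

lemma act_normal_Cons_greater: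
  assumes sorted: "sorted_word (j # w)" and ji: "j \<prec> i"
    and IH: "\<And>k v. sorted_word v \<Longrightarrow> length v \<le> length w \<Longrightarrow> act_normal k v"
  shows "act_normal i (j # w)"
proof -
  let ?u = "j # w"
  have w: "sorted_word w" using sorted by (simp add: sorted_word_Cons)
  have Ni: "act_normal i w" by (rule IH[OF w order.refl])
  define low where "low = basis_act i w - word (insort_word i w)"
  have low: "degree_le (length w) low" "sorted_keys low"
    using Ni sorted_keys_single[OF sorted_word_insort[OF w], of i 1]
    unfolding act_normal_def low_def by (auto intro: sorted_keys_diff)
  have hd: "sorted_word (j # insort_word i w)"
    using sorted ji by (auto simp: sorted_word_Cons set_insort_key sorted_word_insort)
  have "insort_word i ?u = j # insort_word i w" using ji by simp
  then have "act j (word (insort_word i w)) = word (insort_word i ?u)"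
    by (simp add: act_single basis_act_head[OF hd])
  then have rest: "basis_act i ?u - word (insort_word i ?u)
      = act j low + vec_act (br (vbasis i) (vbasis j)) (word w)"
    using basis_act_Cons[OF sorted ji Ni] by (simp add: low_def act_diff)
  have "act_normal j v" if "v \<in> keys low" for v
    using low that by (intro IH) (auto simp: degree_le_def sorted_keys_def)
  then have "degree_le (length ?u) (act j low) \<and> sorted_keys (act j low)"
    using act_normal_keys[OF _ low(1)] by simp
  moreover have "degree_le (length ?u) (act k (word w)) \<and> sorted_keys (act k (word w))" for k
    using act_normal_keys[of "word w" k "length w"] IH[OF w order.refl]
    by (simp add: degree_le_single)
  then have "degree_le (length ?u) (vec_act x (word w)) \<and> sorted_keys (vec_act x (word w))" for x
    unfolding vec_act_def
    by (intro conjI sum_closed[where Q = "degree_le (length ?u)"] sum_closed[where Q = sorted_keys])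
      (simp_all add: degree_le_add degree_le_scalar sorted_keys_add sorted_keys_scalar)
  ultimately have "degree_le (length ?u) (basis_act i ?u - word (insort_word i ?u))"
    and "sorted_keys (basis_act i ?u - word (insort_word i ?u))"
    unfolding rest by (auto intro: degree_le_add sorted_keys_add)
  then show ?thesis
    using sorted_keys_add[OF _ sorted_keys_single[OF sorted_word_insort[OF sorted]],
        of "basis_act i ?u - word (insort_word i ?u)" i 1]
    by (simp add: act_normal_def)
qed

lemma act_normal_sorted: "sorted_word u \<Longrightarrow> act_normal i u"
proof (induct "length u" arbitrary: i u rule: less_induct)
  case less
  show ?case
  proof (cases "u = [] \<or> i \<preceq> hd u")
    case True
    then have "sorted_word (i # u)" using less.prems by (auto simp: sorted_word_Cons_hd)
    moreover have "insort_word i u = i # u" using True by (cases u) auto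
    ultimately show ?thesis by (simp add: act_normal_def basis_act_head sorted_keys_single)
  next
    case False
    then obtain j w where u: "u = j # w" and ji: "j \<prec> i" by (cases u) auto
    show ?thesis
      unfolding u by (rule act_normal_Cons_greater[OF less.prems[unfolded u] ji less.hyps]) (simp_all add: u)
  qed
qed

end

definition lie_relators ::
  "(('i::finite \<Rightarrow> 'k::comm_ring_1) \<Rightarrow> ('i \<Rightarrow> 'k) \<Rightarrow> ('i \<Rightarrow> 'k)) \<Rightarrow> ('i list \<Rightarrow>\<^sub>0 'k) set" where
  "lie_relators br = {emb x * emb y - emb y * emb x - emb (br x y) | x y. True}"

locale pbw_lie = pbw_action br for br :: "('i::finite \<Rightarrow> 'k::comm_ring_1) \<Rightarrow> ('i \<Rightarrow> 'k) \<Rightarrow> ('i \<Rightarrow> 'k)" +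
  assumes lie: "lie_bracket br"
begin

abbreviation e where "e \<equiv> vbasis"

definition bracket_acts :: "('i \<Rightarrow> 'k) \<Rightarrow> ('i \<Rightarrow> 'k) \<Rightarrow> ('i list \<Rightarrow>\<^sub>0 'k) \<Rightarrow> bool" where
  "bracket_acts x y P \<longleftrightarrow> vec_act x (vec_act y P) - vec_act y (vec_act x P) = vec_act (br x y) P"

lemma bracket_acts_add: "bracket_acts x y P \<Longrightarrow> bracket_acts x y Q \<Longrightarrow> bracket_acts x y (P + Q)"
  by (simp add: bracket_acts_def vec_act_add algebra_simps)
lemma bracket_acts_scalar: "bracket_acts x y P \<Longrightarrow> bracket_acts x y (scalar c * P)"
  by (simp add: bracket_acts_def vec_act_scalar right_diff_distrib[symmetric])
lemma bracket_acts_lin_ext: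
  "(\<And>w. w \<in> keys P \<Longrightarrow> bracket_acts x y (f w)) \<Longrightarrow> bracket_acts x y (lin_ext f P)"
  by (rule lin_ext_closed) (auto intro: bracket_acts_add bracket_acts_scalar simp: bracket_acts_def[of x y 0])
lemma bracket_acts_swap: "bracket_acts x y P \<Longrightarrow> bracket_acts y x P"
  unfolding bracket_acts_def
  by (simp add: lie_bracket_antisym[OF lie, of y x] vec_act_vuminus) (metis minus_diff_eq)
lemma bracket_acts_self: "bracket_acts x x P"
  by (simp add: bracket_acts_def lie_bracket_self[OF lie] zero_fun_def[symmetric])

lemma act_sum: "act i (sum g S) = (\<Sum>s\<in>S. act i (g s))"
  by (simp add: act_def lin_ext_sum)

lemma vec_act_vec_act_expansion:
  "vec_act x (vec_act y P) = (\<Sum>i\<in>UNIV. \<Sum>j\<in>UNIV. scalar (x i * y j) * act i (act j P))"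
  by (simp add: vec_act_def act_sum act_scalar sum_distrib_left scalar_mult_scalar_mult)

lemma bracket_acts_from_basis:
  assumes "\<And>i j. bracket_acts (e i) (e j) P"
  shows "bracket_acts x y P"
proof -
  have "br x y = (\<Sum>i\<in>UNIV. (\<lambda>t. x i * br (e i) y t))"
    by (rule klinear_expansion[OF lie_bracket_linear_left[OF lie]])
  also have "\<dots> = (\<Sum>i\<in>UNIV. \<Sum>j\<in>UNIV. (\<lambda>t. (x i * y j) * br (e i) (e j) t))"
  proof (rule sum.cong[OF refl])
    fix i
    have "br (e i) y = (\<Sum>j\<in>UNIV. (\<lambda>t. y j * br (e i) (e j) t))"
      by (rule klinear_expansion[OF lie_bracket_linear_right[OF lie]])
    then show "(\<lambda>t. x i * br (e i) y t) = (\<Sum>j\<in>UNIV. (\<lambda>t. (x i * y j) * br (e i) (e j) t))"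
      by (simp add: fun_eq_iff sum_fun_apply sum_distrib_left mult.assoc)
  qed
  finally have "br x y = \<dots>" .
  then have "vec_act (br x y) P
      = (\<Sum>i\<in>UNIV. \<Sum>j\<in>UNIV. scalar (x i * y j) * vec_act (br (e i) (e j)) P)"
    by (simp add: vec_act_vsum vec_act_vscale)
  also have "\<dots> = (\<Sum>i\<in>UNIV. \<Sum>j\<in>UNIV. scalar (x i * y j) * (act i (act j P) - act j (act i P)))"
    using assms by (simp add: bracket_acts_def vec_act_vbasis)
  also have "\<dots> = vec_act x (vec_act y P) - vec_act y (vec_act x P)"
  proof -
    have "vec_act y (vec_act x P) = (\<Sum>j\<in>UNIV. \<Sum>i\<in>UNIV. scalar (x i * y j) * act j (act i P))"
      by (simp add: vec_act_vec_act_expansion mult.commute)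
    also have "\<dots> = (\<Sum>i\<in>UNIV. \<Sum>j\<in>UNIV. scalar (x i * y j) * act j (act i P))"
      by (rule sum.swap)
    finally show ?thesis
      by (simp add: vec_act_vec_act_expansion right_diff_distrib sum_subtractf)
  qed
  finally show ?thesis by (simp add: bracket_acts_def)
qed

lemma bracket_acts_sorted_head:
  assumes "sorted_word (j # N)" "j \<prec> i"
  shows "bracket_acts (e i) (e j) (word N)"
proof -
  have N: "sorted_word N" using assms(1) by (simp add: sorted_word_Cons)
  have "act i (act j (word N)) = act j (act i (word N)) + vec_act (br (e i) (e j)) (word N)"
    using basis_act_Cons[OF assms act_normal_sorted[OF N]]
    by (simp add: act_single basis_act_head[OF assms(1)])
  then show ?thesis by (simp add: bracket_acts_def vec_act_vbasis)
qed

definition bracket_acts_upto :: "nat \<Rightarrow> bool" where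
  "bracket_acts_upto n \<longleftrightarrow> (\<forall>x y P. sorted_keys P \<longrightarrow> degree_le n P \<longrightarrow> bracket_acts x y P)"

lemma bracket_acts_uptoI:
  assumes "\<And>i j N. sorted_word N \<Longrightarrow> length N \<le> n \<Longrightarrow> bracket_acts (e i) (e j) (word N)"
  shows "bracket_acts_upto n"
  unfolding bracket_acts_upto_def
proof (intro allI impI, rule bracket_acts_from_basis)
  fix P :: "'i list \<Rightarrow>\<^sub>0 'k" and i j assume "sorted_keys P" "degree_le n P"
  then have "bracket_acts (e i) (e j) (lin_ext word P)"
    by (intro bracket_acts_lin_ext assms) (auto simp: sorted_keys_def degree_le_def)
  then show "bracket_acts (e i) (e j) P" by simp
qed

lemma act_act_Cons_smaller:
  assumes upto: "bracket_acts_upto (length M)" and sorted: "sorted_word (k # M)"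
    and ka: "k \<prec> a" and kb: "k \<prec> b"
  shows "act a (act b (word (k # M))) = act k (act a (act b (word M)))
      + vec_act (br (e a) (e k)) (act b (word M)) + act a (vec_act (br (e b) (e k)) (word M))"
proof -
  have M: "sorted_word M" using sorted by (simp add: sorted_word_Cons)
  have "act b (word (k # M)) = act k (act b (word M)) + vec_act (br (e b) (e k)) (word M)"
    using bracket_acts_sorted_head[OF sorted kb] sorted
    by (simp add: bracket_acts_def vec_act_vbasis act_single basis_act_head algebra_simps)
  moreover have "bracket_acts (e a) (e k) (act b (word M))"
  proof -
    define low where "low = act b (word M) - word (insort_word b M)"
    have "sorted_keys low" "degree_le (length M) low"
      using act_normal_sorted[OF M, of b] sorted_word_insort[OF M, of b]
      by (auto simp: low_def act_normal_def act_single intro: sorted_keys_diff sorted_keys_single)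
    then have "bracket_acts (e a) (e k) low" using upto by (simp add: bracket_acts_upto_def)
    moreover have "sorted_word (k # insort_word b M)"
      using sorted kb by (auto simp: sorted_word_Cons set_insort_key sorted_word_insort)
    then have "bracket_acts (e a) (e k) (word (insort_word b M))"
      by (rule bracket_acts_sorted_head[OF _ ka])
    ultimately show ?thesis using bracket_acts_add unfolding low_def by fastforce
  qed
  ultimately show ?thesis
    by (simp add: bracket_acts_def vec_act_vbasis act_add algebra_simps)
qed

text \<open>The case of a word \<open>k # M\<close> and letters \<open>k \<prec> j \<prec> i\<close>: by the previous lemma both
  \<open>e\<^sub>i e\<^sub>j\<close> and \<open>e\<^sub>j e\<^sub>i\<close> are reduced to actions on the shorter word \<open>M\<close>, and the remaining
  terms cancel by the Jacobi identity.\<close>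

lemma bracket_acts_Cons_smaller:
  assumes upto: "bracket_acts_upto (length M)" and kj: "k \<prec> j" and ji: "j \<prec> i"
    and sorted: "sorted_word (k # M)"
  shows "bracket_acts (e i) (e j) (word (k # M))"
proof -
  let ?M = "word M :: 'i list \<Rightarrow>\<^sub>0 'k" and ?N = "word (k # M) :: 'i list \<Rightarrow>\<^sub>0 'k"
  have M: "bracket_acts x y ?M" for x y
    using upto sorted by (simp add: bracket_acts_upto_def sorted_word_Cons sorted_keys_single degree_le_single)
  note comm = M[unfolded bracket_acts_def]
  have kM: "act k ?M = ?N" using sorted by (simp add: act_single basis_act_head)
  have jacobi: "br (e k) (br (e i) (e j)) + br (br (e i) (e k)) (e j) + br (e i) (br (e j) (e k)) = 0"
    using lie_bracket_jacobi[OF lie, of "e k" "e i" "e j"] lie_bracket_antisym[OF lie, of "br (e i) (e k)" "e j"]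
      lie_bracket_antisym[OF lie, of "e i" "e k"] klinear_uminus[OF lie_bracket_linear_right[OF lie]]
    by (simp add: algebra_simps)
  have "act i (act j ?N) - act j (act i ?N)
     = act k (act i (act j ?M) - act j (act i ?M))
       + (vec_act (br (e i) (e k)) (act j ?M) - act j (vec_act (br (e i) (e k)) ?M))
       + (act i (vec_act (br (e j) (e k)) ?M) - vec_act (br (e j) (e k)) (act i ?M))"
    using act_act_Cons_smaller[OF upto sorted, of i j] act_act_Cons_smaller[OF upto sorted, of j i] kj ji
    by (simp add: act_diff algebra_simps)
  also have "\<dots> = act k (vec_act (br (e i) (e j)) ?M) + vec_act (br (br (e i) (e k)) (e j)) ?M
       + vec_act (br (e i) (br (e j) (e k))) ?M"
    using comm[of "e i" "e j"] comm[of "br (e i) (e k)" "e j"] comm[of "e i" "br (e j) (e k)"]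
    by (simp add: vec_act_vbasis)
  also have "\<dots> = vec_act (br (e i) (e j)) ?N + vec_act (br (e k) (br (e i) (e j))
       + br (br (e i) (e k)) (e j) + br (e i) (br (e j) (e k))) ?M"
    using comm[of "e k" "br (e i) (e j)"] kM by (simp add: vec_act_vadd vec_act_vbasis algebra_simps)
  finally show ?thesis using jacobi by (simp add: bracket_acts_def vec_act_vbasis)
qed

lemma bracket_acts_sorted_word: "sorted_word N \<Longrightarrow> bracket_acts x y (word N)"
proof (induct "length N" arbitrary: N x y rule: less_induct)
  case less
  have ordered: "bracket_acts (e a) (e b) (word N)" if ba: "b \<prec> a" for a b
  proof (cases "N = [] \<or> b \<preceq> hd N")
    case True
    then have "sorted_word (b # N)" using less.prems by (simp add: sorted_word_Cons_hd)
    then show ?thesis by (rule bracket_acts_sorted_head[OF _ ba])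
  next
    case False
    then obtain k M where N: "N = k # M" and kb: "k \<prec> b" by (cases N) auto
    have "bracket_acts_upto (length M)"
      by (rule bracket_acts_uptoI) (use less N in auto)
    then show ?thesis using bracket_acts_Cons_smaller[OF _ kb ba] less.prems N by simp
  qed
  show ?case
  proof (rule bracket_acts_from_basis)
    fix i j :: 'i
    consider "j \<prec> i" | "i = j" | "i \<prec> j"
      by (metis linorder_neqE_nat to_nat_split)
    then show "bracket_acts (e i) (e j) (word N)"
      by cases (auto intro: ordered bracket_acts_swap simp: bracket_acts_self)
  qed
qed

lemma bracket_acts_sorted: "sorted_keys Q \<Longrightarrow> bracket_acts x y Q"
  using lin_ext_word[of Q] bracket_acts_lin_ext[of Q x y word] bracket_acts_sorted_word
  by (metis sorted_keys_def)

fun act_word :: "'i list \<Rightarrow> ('i list \<Rightarrow>\<^sub>0 'k) \<Rightarrow> ('i list \<Rightarrow>\<^sub>0 'k)" where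
  "act_word [] Q = Q"
| "act_word (i # w) Q = act i (act_word w Q)"

lemma act_word_add: "act_word w (P + Q) = act_word w P + act_word w Q"
  by (induct w) (auto simp: act_add)
lemma act_word_scalar: "act_word w (scalar c * P) = scalar c * act_word w P"
  by (induct w) (auto simp: act_scalar)
lemma act_word_append: "act_word (u @ v) Q = act_word u (act_word v Q)"
  by (induct u) auto
lemma act_word_sorted: "sorted_word w \<Longrightarrow> act_word w (word []) = word w"
  by (induct w) (auto simp: sorted_word_Cons_hd act_single basis_act_head)

definition rep :: "('i list \<Rightarrow>\<^sub>0 'k) \<Rightarrow> ('i list \<Rightarrow>\<^sub>0 'k) \<Rightarrow> ('i list \<Rightarrow>\<^sub>0 'k)" where
  "rep P Q = lin_ext (\<lambda>w. act_word w Q) P"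

lemma rep_add_left: "rep (P + P') Q = rep P Q + rep P' Q"
  by (simp add: rep_def lin_ext_add)
lemma rep_diff_left: "rep (P - P') Q = rep P Q - rep P' Q"
  by (simp add: rep_def lin_ext_diff)
lemma rep_zero_left [simp]: "rep 0 Q = 0"
  by (simp add: rep_def)
lemma rep_single: "rep (single w c) Q = scalar c * act_word w Q"
  by (simp add: rep_def)
lemma rep_add_right: "rep P (Q + Q') = rep P Q + rep P Q'"
  by (rule additive_eqI[where P = P]) (simp_all add: rep_add_left rep_single act_word_add distrib_left)
lemma rep_zero_right [simp]: "rep P 0 = 0"
  using rep_add_right[of P 0 0] by simp

lemma rep_mult: "rep (P * P') Q = rep P (rep P' Q)"
proof (rule additive_eqI[where P = P])
  fix w c
  show "rep (single w c * P') Q = rep (single w c) (rep P' Q)"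
  proof (rule additive_eqI[where P = P'])
    fix v d
    show "rep (single w c * single v d) Q = rep (single w c) (rep (single v d) Q)"
      by (simp add: single_mult_single rep_single act_word_append act_word_scalar
          scalar_mult_scalar_mult scalar_mult)
  qed (auto simp: distrib_left rep_add_left rep_add_right)
qed (auto simp: distrib_right rep_add_left)

lemma rep_emb: "rep (emb x) Q = vec_act x Q"
  by (simp add: emb_def rep_def lin_ext_sum vec_act_def act_def)

lemma sorted_keys_rep: "sorted_keys Q \<Longrightarrow> sorted_keys (rep P Q)"
proof -
  assume Q: "sorted_keys Q"
  have "sorted_keys (act i R)" if "sorted_keys R" for i R
    unfolding act_def using that act_normal_sorted
    by (intro sorted_keys_lin_ext) (auto simp: act_normal_def sorted_keys_def)
  then have "sorted_keys (act_word w Q)" for w using Q by (induct w) auto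
  then show ?thesis unfolding rep_def by (intro sorted_keys_lin_ext)
qed

lemma rep_lie_relator: "r \<in> lie_relators br \<Longrightarrow> sorted_keys Q \<Longrightarrow> rep r Q = 0"
  using bracket_acts_sorted
  by (auto simp: lie_relators_def rep_diff_left rep_mult rep_emb bracket_acts_def)

lemma rep_ideal: "P \<in> ideal_gen (lie_relators br) \<Longrightarrow> rep P (word []) = 0"
proof (induct rule: ideal_gen.induct)
  case (gen g a b)
  have "sorted_keys (rep b (word []))" by (rule sorted_keys_rep) (simp add: sorted_keys_single)
  then show ?case using gen by (simp add: rep_mult rep_lie_relator)
qed (simp_all add: rep_add_left)

theorem sorted_keys_ideal_eq_0:
  assumes "P \<in> ideal_gen (lie_relators br)" "sorted_keys P"
  shows "P = 0"
proof -
  have "rep P (word []) = lin_ext word P"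
    unfolding rep_def using assms(2) by (intro lin_ext_cong) (auto simp: act_word_sorted sorted_keys_def)
  then show ?thesis using rep_ideal[OF assms(1)] by simp
qed

end

definition degree_le_mod :: "nat \<Rightarrow> ('i list \<Rightarrow>\<^sub>0 'k::comm_ring_1) set \<Rightarrow> ('i list \<Rightarrow>\<^sub>0 'k) \<Rightarrow> bool" where
  "degree_le_mod n G P \<longleftrightarrow> (\<exists>r. degree_le n r \<and> P - r \<in> ideal_gen G)"

definition sorted_rep :: "nat \<Rightarrow> ('i::countable list \<Rightarrow>\<^sub>0 'k::comm_ring_1) set \<Rightarrow> ('i list \<Rightarrow>\<^sub>0 'k) \<Rightarrow> bool" where
  "sorted_rep n G P \<longleftrightarrow> (\<exists>s. sorted_keys s \<and> degree_le n s \<and> P - s \<in> ideal_gen G)"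

lemma degree_le_mod_add: "degree_le_mod n G P \<Longrightarrow> degree_le_mod n G Q \<Longrightarrow> degree_le_mod n G (P + Q)"
  unfolding degree_le_mod_def
  by (metis (no_types, lifting) add_diff_add degree_le_add ideal_gen.add)
lemma degree_le_mod_scalar: "degree_le_mod n G P \<Longrightarrow> degree_le_mod n G (scalar c * P)"
  unfolding degree_le_mod_def
  by (metis degree_le_scalar ideal_gen_mult_left right_diff_distrib)
lemma degree_le_mod_zero: "degree_le_mod n G 0"
  unfolding degree_le_mod_def by (rule exI[of _ 0]) (simp add: ideal_gen.zero)
lemma degree_le_mod_lin_ext:
  "(\<And>w. w \<in> keys P \<Longrightarrow> degree_le_mod n G (f w)) \<Longrightarrow> degree_le_mod n G (lin_ext f P)"
  by (rule lin_ext_closed)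
    (auto intro: degree_le_mod_add degree_le_mod_scalar degree_le_mod_zero)
lemma degree_le_mod_mono: "degree_le_mod m G P \<Longrightarrow> m \<le> n \<Longrightarrow> degree_le_mod n G P"
  unfolding degree_le_mod_def by (auto intro: degree_le_mono)

lemma sorted_rep_self: "sorted_keys P \<Longrightarrow> degree_le n P \<Longrightarrow> sorted_rep n G P"
  unfolding sorted_rep_def by (rule exI[of _ P]) (simp add: ideal_gen.zero)
lemma sorted_rep_add: "sorted_rep n G P \<Longrightarrow> sorted_rep n G Q \<Longrightarrow> sorted_rep n G (P + Q)"
  unfolding sorted_rep_def
proof (elim exE conjE)
  fix s t assume "sorted_keys s" "degree_le n s" "P - s \<in> ideal_gen G"
    "sorted_keys t" "degree_le n t" "Q - t \<in> ideal_gen G"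
  then show "\<exists>u. sorted_keys u \<and> degree_le n u \<and> P + Q - u \<in> ideal_gen G"
    using ideal_gen.add[of "P - s" G "Q - t"]
    by (intro exI[of _ "s + t"]) (simp add: sorted_keys_add degree_le_add add_diff_add)
qed
lemma sorted_rep_scalar: "sorted_rep n G P \<Longrightarrow> sorted_rep n G (scalar c * P)"
  unfolding sorted_rep_def
proof (elim exE conjE)
  fix s assume "sorted_keys s" "degree_le n s" "P - s \<in> ideal_gen G"
  then show "\<exists>u. sorted_keys u \<and> degree_le n u \<and> scalar c * P - u \<in> ideal_gen G"
    using ideal_gen_mult_left[of "P - s" G "scalar c"]
    by (intro exI[of _ "scalar c * s"]) (simp add: sorted_keys_scalar degree_le_scalar right_diff_distrib)
qed
lemma sorted_rep_lin_ext:
  "(\<And>w. w \<in> keys P \<Longrightarrow> sorted_rep n G (f w)) \<Longrightarrow> sorted_rep n G (lin_ext f P)"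
  by (rule lin_ext_closed) (auto intro: sorted_rep_add sorted_rep_scalar sorted_rep_self)
lemma sorted_rep_mod: "P - Q \<in> ideal_gen G \<Longrightarrow> sorted_rep n G Q \<Longrightarrow> sorted_rep n G P"
  unfolding sorted_rep_def using ideal_gen.add[of "P - Q" G] by fastforce
lemma sorted_rep_mono: "sorted_rep m G P \<Longrightarrow> m \<le> n \<Longrightarrow> sorted_rep n G P"
  unfolding sorted_rep_def by (auto intro: degree_le_mono)

lemma degree_le_emb_mult_word: "degree_le (Suc (length v)) (emb x * word v)"
  using degree_le_mult[OF degree_le_emb degree_le_single[of v "length v" 1]] by simp

lemma degree_le_mod_word_mult:
  assumes "degree_le_mod n G P"
  shows "degree_le_mod (Suc n) G (word [a] * P)"
proof -
  obtain r where r: "degree_le n r" "P - r \<in> ideal_gen G"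
    using assms by (auto simp: degree_le_mod_def)
  have "degree_le 1 (word [a])" by (simp add: degree_le_single)
  from degree_le_mult[OF this r(1)] have "degree_le (Suc n) (word [a] * r)" by simp
  moreover have "word [a] * P - word [a] * r \<in> ideal_gen G"
    using ideal_gen_mult_left[OF r(2)] by (simp add: right_diff_distrib)
  ultimately show ?thesis unfolding degree_le_mod_def by blast
qed

lemma lie_relator_vbasis: "emb x * word [a] - word [a] * emb x - emb (br x (vbasis a)) \<in> lie_relators br"
  unfolding lie_relators_def emb_vbasis[symmetric] by blast

lemma word_Cons_insort_mod:
  fixes br :: "('i::finite \<Rightarrow> 'k::comm_ring_1) \<Rightarrow> ('i \<Rightarrow> 'k) \<Rightarrow> ('i \<Rightarrow> 'k)"
  shows "degree_le_mod (length v) (lie_relators br) (word (i # v) - word (insort_word i v))"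
proof (induct v)
  case (Cons j v)
  show ?case
  proof (cases "i \<preceq> j")
    case False
    let ?g = "emb (vbasis i) * word [j] - word [j] * emb (vbasis i) - emb (br (vbasis i) (vbasis j))"
    have "word (i # j # v) - word (insort_word i (j # v))
        = word [j] * (word (i # v) - word (insort_word i v)) + (?g * word v + emb (br (vbasis i) (vbasis j)) * word v)"
      using False by (simp add: emb_vbasis algebra_simps single_mult_single)
    moreover have "degree_le_mod (length (j # v)) (lie_relators br) (?g * word v + emb (br (vbasis i) (vbasis j)) * word v)"
      unfolding degree_le_mod_def
      by (rule exI[of _ "emb (br (vbasis i) (vbasis j)) * word v"])
        (simp add: degree_le_emb_mult_word ideal_gen.gen[OF lie_relator_vbasis, of 1, simplified])
    ultimately show ?thesis
      using degree_le_mod_add degree_le_mod_word_mult[OF Cons] by fastforce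
  qed (simp add: degree_le_mod_zero)
qed (simp add: degree_le_mod_zero)

lemma word_mult_eq_lin_ext: "word [i] * s = lin_ext (\<lambda>u. word (i # u)) s"
  by (rule additive_eqI[where P = s])
    (simp_all add: distrib_left lin_ext_add single_mult_single scalar_mult_single)

lemma sorted_rep_word_Cons:
  fixes br :: "('i::finite \<Rightarrow> 'k::comm_ring_1) \<Rightarrow> ('i \<Rightarrow> 'k) \<Rightarrow> ('i \<Rightarrow> 'k)"
  assumes IH: "\<And>P. degree_le n P \<Longrightarrow> sorted_rep n (lie_relators br) P" and v: "length v \<le> n"
  shows "sorted_rep (Suc n) (lie_relators br) (word (i # v))"
proof -
  obtain s where s: "sorted_keys s" "degree_le n s" "word v - s \<in> ideal_gen (lie_relators br)"
    using IH[OF degree_le_single[OF v]] by (auto simp: sorted_rep_def)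
  have "word (i # v) - lin_ext (\<lambda>u. word (i # u)) s = word [i] * (word v - s)"
    by (simp add: word_mult_eq_lin_ext right_diff_distrib single_mult_single)
  moreover have "sorted_rep (Suc n) (lie_relators br) (lin_ext (\<lambda>u. word (i # u)) s)"
  proof (rule sorted_rep_lin_ext)
    fix u assume u: "u \<in> keys s"
    then have su: "sorted_word u" "length u \<le> n" using s by (auto simp: sorted_keys_def degree_le_def)
    obtain r where r: "degree_le (length u) r"
      "word (i # u) - word (insort_word i u) - r \<in> ideal_gen (lie_relators br)"
      using word_Cons_insort_mod[of u br i] by (auto simp: degree_le_mod_def)
    have "sorted_rep (Suc n) (lie_relators br) (word (insort_word i u))"
      using su by (intro sorted_rep_self sorted_keys_single sorted_word_insort degree_le_single) simp_all
    moreover have "sorted_rep (Suc n) (lie_relators br) r"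
      using IH[OF degree_le_mono[OF r(1) su(2)]] by (rule sorted_rep_mono) simp
    ultimately have "sorted_rep (Suc n) (lie_relators br) (word (insort_word i u) + r)"
      by (rule sorted_rep_add)
    then show "sorted_rep (Suc n) (lie_relators br) (word (i # u))"
      by (rule sorted_rep_mod[rotated]) (use r(2) in \<open>simp add: algebra_simps\<close>)
  qed
  ultimately show ?thesis
    using ideal_gen_mult_left[OF s(3), of "word [i]"] by (metis sorted_rep_mod)
qed

theorem sorted_rep_exists:
  fixes br :: "('i::finite \<Rightarrow> 'k::comm_ring_1) \<Rightarrow> ('i \<Rightarrow> 'k) \<Rightarrow> ('i \<Rightarrow> 'k)"
  shows "degree_le n P \<Longrightarrow> sorted_rep n (lie_relators br) P"
proof (induct n arbitrary: P)
  case 0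
  then have "sorted_keys P" by (auto simp: degree_le_def sorted_keys_def)
  then show ?case using 0 by (rule sorted_rep_self)
next
  case (Suc n)
  have "sorted_rep (Suc n) (lie_relators br) (word w)" if "length w \<le> Suc n" for w
  proof (cases w)
    case Nil
    then show ?thesis by (simp add: sorted_rep_self sorted_keys_single degree_le_single)
  qed (use sorted_rep_word_Cons[OF Suc.hyps] that in simp)
  then have "sorted_rep (Suc n) (lie_relators br) (lin_ext word P)"
    using Suc.prems by (intro sorted_rep_lin_ext) (auto simp: degree_le_def)
  then show ?case by simp
qed

section \<open>The factorization map\<close>

lift_definition antipode_pm :: "('i list \<Rightarrow>\<^sub>0 'k::comm_ring_1) \<Rightarrow> ('i list \<Rightarrow>\<^sub>0 'k)" is
  "\<lambda>p u. (- 1) ^ length u * p (rev u)"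
proof -
  fix p :: "'i list \<Rightarrow> 'k" assume "finite {x. p x \<noteq> 0}"
  then have "finite (rev ` {x. p x \<noteq> 0})" by simp
  moreover have "{u. (- 1) ^ length u * p (rev u) \<noteq> 0} \<subseteq> rev ` {x. p x \<noteq> 0}"
    by (auto intro!: image_eqI[where x = "rev _"])
  ultimately show "finite {u. (- 1) ^ length u * p (rev u) \<noteq> (0::'k)}"
    by (rule finite_subset[rotated])
qed

lemma lookup_antipode_pm: "lookup (antipode_pm P) u = (- 1) ^ length u * lookup P (rev u)"
  by transfer simp

lemma antipode_pm_add: "antipode_pm (P + Q) = antipode_pm P + antipode_pm Q"
  by (rule poly_mapping_eqI) (simp add: lookup_antipode_pm lookup_add distrib_left)

lemma antipode_pm_zero [simp]: "antipode_pm 0 = 0"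
  by (rule poly_mapping_eqI) (simp add: lookup_antipode_pm)

lemma antipode_pm_one [simp]: "antipode_pm 1 = 1"
  by (rule poly_mapping_eqI) (simp add: lookup_antipode_pm lookup_one when_def zero_list_def)

lemma antipode_pm_single: "antipode_pm (single u c) = single (rev u) ((- 1) ^ length u * c)"
  by (rule poly_mapping_eqI) (auto simp: lookup_antipode_pm lookup_single when_def)

lemma antipode_pm_mult: "antipode_pm (P * Q) = antipode_pm Q * antipode_pm P"
proof (rule additive_eqI[where P = P])
  fix u a
  show "antipode_pm (single u a * Q) = antipode_pm Q * antipode_pm (single u a)"
  proof (rule additive_eqI[where P = Q])
    fix v b
    show "antipode_pm (single u a * single v b) = antipode_pm (single v b) * antipode_pm (single u a)"
      by (simp add: single_mult_single antipode_pm_single power_add mult_ac)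
  qed (auto simp: distrib_left distrib_right antipode_pm_add)
qed (auto simp: distrib_left distrib_right antipode_pm_add)

lemma antipode_pm_emb: "antipode_pm (emb v) = - emb v"
proof -
  have sum: "antipode_pm (sum g S) = (\<Sum>s\<in>S. antipode_pm (g s))" for g and S :: "'a set"
    by (induct S rule: infinite_finite_induct) (auto simp: antipode_pm_add)
  show ?thesis by (simp add: emb_def sum antipode_pm_single single_uminus sum_negf)
qed

fun word_prod :: "(('i::finite \<Rightarrow> 'k::comm_ring_1) \<Rightarrow> ('i \<Rightarrow> 'k)) \<Rightarrow> 'i list \<Rightarrow> ('i list \<Rightarrow>\<^sub>0 'k)" where
  "word_prod f [] = 1"
| "word_prod f (i # w) = emb (f (vbasis i)) * word_prod f w"

definition factor_word :: "(('i::finite \<Rightarrow> 'k::field) \<Rightarrow> ('i \<Rightarrow> 'k)) \<Rightarrow> 'i list \<Rightarrow> ('i list \<Rightarrow>\<^sub>0 'k)" where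
  "factor_word R w = (\<Sum>S\<in>Pow {..<length w}.
     word_prod (R_plus R) (nths w S) * antipode_pm (word_prod (R_minus R) (nths w ({..<length w} - S))))"

definition factor :: "(('i::finite \<Rightarrow> 'k::field) \<Rightarrow> ('i \<Rightarrow> 'k)) \<Rightarrow> ('i list \<Rightarrow>\<^sub>0 'k) \<Rightarrow> ('i list \<Rightarrow>\<^sub>0 'k)" where
  "factor R P = lin_ext (factor_word R) P"

definition twisted_act ::
  "(('i::finite \<Rightarrow> 'k::field) \<Rightarrow> ('i \<Rightarrow> 'k)) \<Rightarrow> ('i \<Rightarrow> 'k) \<Rightarrow> ('i list \<Rightarrow>\<^sub>0 'k) \<Rightarrow> ('i list \<Rightarrow>\<^sub>0 'k)" where
  "twisted_act R v Q = emb (R_plus R v) * Q - Q * emb (R_minus R v)"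

lemma Pow_lessThan_Suc:
  "Pow {..<Suc n} = (\<lambda>S. Suc ` S) ` Pow {..<n} \<union> (\<lambda>S. insert 0 (Suc ` S)) ` Pow {..<n}"
proof (intro set_eqI iffI)
  fix T assume T: "T \<in> Pow {..<Suc n}"
  define S where "S = {j. Suc j \<in> T}"
  have "S \<in> Pow {..<n}" using T by (auto simp: S_def)
  moreover have "T - {0} = Suc ` S"
  proof (intro set_eqI iffI)
    fix x assume "x \<in> T - {0}"
    then show "x \<in> Suc ` S" by (cases x) (auto simp: S_def)
  qed (auto simp: S_def)
  then have "T = Suc ` S \<or> T = insert 0 (Suc ` S)" by blast
  ultimately show "T \<in> (\<lambda>S. Suc ` S) ` Pow {..<n} \<union> (\<lambda>S. insert 0 (Suc ` S)) ` Pow {..<n}"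
    by blast
qed auto

lemma sum_Pow_lessThan_Suc:
  "(\<Sum>T\<in>Pow {..<Suc n}. g T) = (\<Sum>S\<in>Pow {..<n}. g (Suc ` S)) + (\<Sum>S\<in>Pow {..<n}. g (insert 0 (Suc ` S)))"
proof -
  have inj1: "inj_on (\<lambda>S. Suc ` S) (Pow {..<n})"
    by (rule inj_onI) (simp add: inj_image_eq_iff)
  have inj2: "inj_on (\<lambda>S. insert 0 (Suc ` S)) (Pow {..<n})"
  proof (rule inj_onI)
    fix A B :: "nat set" assume "insert 0 (Suc ` A) = insert 0 (Suc ` B)"
    then have "Suc ` A = Suc ` B" by (metis Diff_insert_absorb Zero_not_Suc imageE)
    then show "A = B" by (simp add: inj_image_eq_iff)
  qed
  have "(\<lambda>S. Suc ` S) ` Pow {..<n} \<inter> (\<lambda>S. insert 0 (Suc ` S)) ` Pow {..<n} = {}" by auto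
  then show ?thesis
    unfolding Pow_lessThan_Suc
    by (simp add: sum.union_disjoint sum.reindex[OF inj1] sum.reindex[OF inj2])
qed

lemma factor_word_Nil [simp]: "factor_word R [] = 1"
  by (simp add: factor_word_def)

lemma factor_word_Cons: "factor_word R (i # w) = twisted_act R (vbasis i) (factor_word R w)"
proof -
  have nths_Suc: "nths (i # w) (Suc ` S) = nths w S" for S
    by (simp add: nths_Cons image_iff)
  have nths_0: "nths (i # w) (insert 0 (Suc ` S)) = i # nths w S" for S
    by (simp add: nths_Cons image_iff)
  have compl1: "{..<Suc n} - Suc ` S = insert 0 (Suc ` ({..<n} - S))" for n S
    by (rule set_eqI) (case_tac x, auto)
  have compl2: "{..<Suc n} - insert 0 (Suc ` S) = Suc ` ({..<n} - S)" for n S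
    by (rule set_eqI) (case_tac x, auto)
  show ?thesis
    unfolding factor_word_def twisted_act_def
    by (simp add: sum_Pow_lessThan_Suc compl1 compl2 nths_Suc nths_0 antipode_pm_mult antipode_pm_emb
        sum_distrib_left sum_distrib_right mult.assoc sum_negf[symmetric])
qed

lemma klinear_R_plus: "klinear R \<Longrightarrow> klinear (R_plus (R::('i \<Rightarrow> 'k::field) \<Rightarrow> _))"
  unfolding klinear_def R_plus_def by (simp add: fun_eq_iff add_divide_distrib times_divide_eq_right ring_distribs add_ac)
lemma klinear_R_minus: "klinear R \<Longrightarrow> klinear (R_minus (R::('i \<Rightarrow> 'k::field) \<Rightarrow> _))"
  unfolding klinear_def R_minus_def by (simp add: fun_eq_iff diff_divide_distrib add_divide_distrib times_divide_eq_right ring_distribs add_ac)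

lemma R_plus_eq_R_minus_add: "R_plus R v = R_minus R v + (v::'i \<Rightarrow> 'k::field_char_0)"
  by (simp add: R_plus_def R_minus_def fun_eq_iff field_simps)

text \<open>\<open>R\<^sub>\<plusminus>\<close> are Lie algebra morphisms \<open>g\<^sub>R \<rightarrow> g\<close>: with \<open>B = [Rx, y] + [x, Ry]\<close>, the r-matrix
  identity \<open>[Rx, Ry] = RB - [x, y]\<close> makes both sides equal to \<open>(RB \<plusminus> B)/4\<close>.\<close>

lemma R_plus_minus_bracket_R:
  fixes br :: "('i \<Rightarrow> 'k::field) \<Rightarrow> ('i \<Rightarrow> 'k) \<Rightarrow> ('i \<Rightarrow> 'k)"
  assumes lb: "lie_bracket br" and cr: "classical_r_matrix br R"
  shows "R_plus R (bracket_R br R x y) = br (R_plus R x) (R_plus R y)"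
    and "R_minus R (bracket_R br R x y) = br (R_minus R x) (R_minus R y)"
proof -
  note l1 = lie_bracket_linear_right[OF lb] and l2 = lie_bracket_linear_left[OF lb]
  have kR: "klinear R" using cr unfolding classical_r_matrix_def by blast
  define B where "B = (\<lambda>i. br (R x) y i + br x (R y) i)"
  have cl: "br (R x) (R y) j = R B j - br x y j" for j
    using cr unfolding classical_r_matrix_def B_def by simp
  have half: "(\<lambda>i. v i / 2) = (\<lambda>i. inverse 2 * v i)" for v :: "'i \<Rightarrow> 'k"
    by (rule ext) (simp only: divide_inverse_commute)
  have bR: "bracket_R br R x y = (\<lambda>i. inverse 2 * B i)"
    unfolding bracket_R_def B_def half ..
  have Rp: "R_plus R v = (\<lambda>i. inverse 2 * (\<lambda>i. R v i + v i) i)" for v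
    unfolding R_plus_def half ..
  have Rm: "R_minus R v = (\<lambda>i. inverse 2 * (\<lambda>i. R v i - v i) i)" for v
    unfolding R_minus_def half ..
  have scale: "br (\<lambda>i. c * a i) (\<lambda>i. c * b i) = (\<lambda>j. c * (c * br a b j))" for c a b
    by (simp add: klinear_scale[OF l1] klinear_scale[OF l2])
  have add1: "br (\<lambda>i. a i + b i) c = (\<lambda>j. br a c j + br b c j)" for a b c
    using l2 by (simp add: klinear_def)
  have add2: "br c (\<lambda>i. a i + b i) = (\<lambda>j. br c a j + br c b j)" for a b c
    using l1 by (simp add: klinear_def)
  have diff1: "br (\<lambda>i. a i - b i) c = (\<lambda>j. br a c j - br b c j)" for a b c
    using klinear_diff[OF l2] by (simp add: fun_diff_def)
  have diff2: "br c (\<lambda>i. a i - b i) = (\<lambda>j. br c a j - br c b j)" for a b c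
    using klinear_diff[OF l1] by (simp add: fun_diff_def)
  have RB: "R (\<lambda>i. inverse 2 * B i) = (\<lambda>j. inverse 2 * R B j)"
    by (rule klinear_scale[OF kR])
  show "R_plus R (bracket_R br R x y) = br (R_plus R x) (R_plus R y)"
  proof
    fix j
    show "R_plus R (bracket_R br R x y) j = br (R_plus R x) (R_plus R y) j"
      unfolding Rp scale bR add1 add2 RB using cl[of j] by (simp add: B_def algebra_simps)
  qed
  show "R_minus R (bracket_R br R x y) = br (R_minus R x) (R_minus R y)"
  proof
    fix j
    show "R_minus R (bracket_R br R x y) j = br (R_minus R x) (R_minus R y) j"
      unfolding Rm scale bR diff1 diff2 RB using cl[of j] by (simp add: B_def algebra_simps)
  qed
qed

lemma twisted_act_add: "twisted_act R v (P + Q) = twisted_act R v P + twisted_act R v Q"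
  by (simp add: twisted_act_def algebra_simps)
lemma twisted_act_scalar: "twisted_act R v (scalar c * P) = scalar c * twisted_act R v P"
  by (simp add: twisted_act_def mult_scalar_left_commute mult.assoc right_diff_distrib)
lemma twisted_act_ideal: "Q \<in> ideal_gen G \<Longrightarrow> twisted_act R v Q \<in> ideal_gen G"
  unfolding twisted_act_def by (intro ideal_gen_diff ideal_gen_mult_left ideal_gen_mult_right)

lemma twisted_act_expansion:
  assumes "klinear R"
  shows "twisted_act R x Q = (\<Sum>i\<in>UNIV. scalar (x i) * twisted_act R (vbasis i) Q)"
  unfolding twisted_act_def emb_expansion[OF klinear_R_plus[OF assms], of x]
    emb_expansion[OF klinear_R_minus[OF assms], of x]
  by (simp add: sum_distrib_right sum_distrib_left sum_subtractf[symmetric] right_diff_distrib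
      mult.assoc mult_scalar_left_commute)

fun twisted_act_word where
  "twisted_act_word R [] Q = Q"
| "twisted_act_word R (i # w) Q = twisted_act R (vbasis i) (twisted_act_word R w Q)"

lemma twisted_act_word_add: "twisted_act_word R w (P + Q) = twisted_act_word R w P + twisted_act_word R w Q"
  by (induct w) (auto simp: twisted_act_add)
lemma twisted_act_word_scalar: "twisted_act_word R w (scalar c * P) = scalar c * twisted_act_word R w P"
  by (induct w) (auto simp: twisted_act_scalar)
lemma twisted_act_word_append: "twisted_act_word R (u @ v) Q = twisted_act_word R u (twisted_act_word R v Q)"
  by (induct u) auto
lemma twisted_act_word_ideal: "Q \<in> ideal_gen G \<Longrightarrow> twisted_act_word R w Q \<in> ideal_gen G"
  by (induct w) (auto intro: twisted_act_ideal)

lemma factor_word_eq_twisted_act_word: "factor_word R w = twisted_act_word R w 1"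
  by (induct w) (auto simp: factor_word_Cons)

definition twisted_rep where
  "twisted_rep R P Q = lin_ext (\<lambda>w. twisted_act_word R w Q) P"

lemma factor_eq_twisted_rep: "factor R P = twisted_rep R P 1"
  unfolding factor_def twisted_rep_def by (rule lin_ext_cong) (simp add: factor_word_eq_twisted_act_word)

lemma twisted_rep_add_left: "twisted_rep R (P + P') Q = twisted_rep R P Q + twisted_rep R P' Q"
  by (simp add: twisted_rep_def lin_ext_add)
lemma twisted_rep_diff_left: "twisted_rep R (P - P') Q = twisted_rep R P Q - twisted_rep R P' Q"
  by (simp add: twisted_rep_def lin_ext_diff)
lemma twisted_rep_single: "twisted_rep R (single w c) Q = scalar c * twisted_act_word R w Q"
  by (simp add: twisted_rep_def)
lemma twisted_rep_add_right: "twisted_rep R P (Q + Q') = twisted_rep R P Q + twisted_rep R P Q'"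
  by (rule additive_eqI[where P = P])
    (simp_all add: twisted_rep_add_left twisted_rep_single twisted_act_word_add distrib_left)

lemma twisted_rep_mult: "twisted_rep R (P * P') Q = twisted_rep R P (twisted_rep R P' Q)"
proof (rule additive_eqI[where P = P])
  fix w c
  show "twisted_rep R (single w c * P') Q = twisted_rep R (single w c) (twisted_rep R P' Q)"
  proof (rule additive_eqI[where P = P'])
    fix v d
    show "twisted_rep R (single w c * single v d) Q = twisted_rep R (single w c) (twisted_rep R (single v d) Q)"
      by (simp add: single_mult_single twisted_rep_single twisted_act_word_append twisted_act_word_scalar
          scalar_mult_scalar_mult scalar_mult)
  qed (auto simp: distrib_left twisted_rep_add_left twisted_rep_add_right)
qed (auto simp: distrib_right twisted_rep_add_left)

lemma twisted_rep_emb: "klinear R \<Longrightarrow> twisted_rep R (emb x) Q = twisted_act R x Q"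
  by (simp add: emb_def twisted_rep_def lin_ext_sum twisted_act_expansion)

lemma twisted_rep_ideal: "Q \<in> ideal_gen G \<Longrightarrow> twisted_rep R P Q \<in> ideal_gen G"
  unfolding twisted_rep_def by (rule ideal_gen_lin_ext) (auto intro: twisted_act_word_ideal)

lemma twisted_rep_lie_relator:
  fixes br :: "('i::finite \<Rightarrow> 'k::field) \<Rightarrow> ('i \<Rightarrow> 'k) \<Rightarrow> ('i \<Rightarrow> 'k)"
  assumes lb: "lie_bracket br" and cr: "classical_r_matrix br R" and r: "r \<in> lie_relators (bracket_R br R)"
  shows "twisted_rep R r Q \<in> ideal_gen (lie_relators br)"
proof -
  have kR: "klinear R" using cr unfolding classical_r_matrix_def by blast
  obtain x y where r: "r = emb x * emb y - emb y * emb x - emb (bracket_R br R x y)"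
    using r unfolding lie_relators_def by blast
  let ?p = "\<lambda>v. emb (R_plus R v)" and ?m = "\<lambda>v. emb (R_minus R v)"
  have "twisted_rep R r Q
      = twisted_act R x (twisted_act R y Q) - twisted_act R y (twisted_act R x Q) - twisted_act R (bracket_R br R x y) Q"
    by (simp only: r twisted_rep_diff_left twisted_rep_mult twisted_rep_emb[OF kR])
  also have "\<dots> = (?p x * ?p y - ?p y * ?p x - ?p (bracket_R br R x y)) * Q
      - Q * (?m x * ?m y - ?m y * ?m x - ?m (bracket_R br R x y))"
    by (simp add: twisted_act_def algebra_simps)
  finally have "twisted_rep R r Q = \<dots>" .
  moreover have "?p x * ?p y - ?p y * ?p x - ?p (bracket_R br R x y) \<in> lie_relators br"
    and "?m x * ?m y - ?m y * ?m x - ?m (bracket_R br R x y) \<in> lie_relators br"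
    unfolding lie_relators_def R_plus_minus_bracket_R[OF lb cr] by blast+
  ultimately show ?thesis
    by (metis ideal_gen.gen ideal_gen_diff mult_1_left mult_1_right)
qed

lemma factor_ideal:
  fixes br :: "('i::finite \<Rightarrow> 'k::field) \<Rightarrow> ('i \<Rightarrow> 'k) \<Rightarrow> ('i \<Rightarrow> 'k)"
  assumes "lie_bracket br" "classical_r_matrix br R"
  shows "P \<in> ideal_gen (lie_relators (bracket_R br R)) \<Longrightarrow> factor R P \<in> ideal_gen (lie_relators br)"
proof (induct rule: ideal_gen.induct)
  case (gen g a b)
  have "twisted_rep R g (twisted_rep R b 1) \<in> ideal_gen (lie_relators br)"
    by (rule twisted_rep_lie_relator[OF assms gen])
  then show ?case by (simp add: factor_eq_twisted_rep twisted_rep_mult twisted_rep_ideal)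
qed (simp_all add: factor_def lin_ext_add ideal_gen.intros)

lemma commutator_word_degree_le_mod:
  fixes br :: "('i::finite \<Rightarrow> 'k::comm_ring_1) \<Rightarrow> ('i \<Rightarrow> 'k) \<Rightarrow> ('i \<Rightarrow> 'k)"
  shows "degree_le_mod (length u) (lie_relators br) (emb y * word u - word u * emb y)"
proof (induct u)
  case Nil
  show ?case by (simp add: Nil_eq_zero degree_le_mod_zero)
next
  case (Cons a u)
  let ?g = "emb y * word [a] - word [a] * emb y - emb (br y (vbasis a))"
  have "word (a # u) = word [a] * (word u :: 'i list \<Rightarrow>\<^sub>0 'k)"
    by (simp add: single_mult_single)
  then have "emb y * word (a # u) - word (a # u) * emb y
      = word [a] * (emb y * word u - word u * emb y) + (?g * word u + emb (br y (vbasis a)) * word u)"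
    by (simp add: algebra_simps)
  moreover have "degree_le_mod (length (a # u)) (lie_relators br) (?g * word u + emb (br y (vbasis a)) * word u)"
    unfolding degree_le_mod_def
    by (rule exI[of _ "emb (br y (vbasis a)) * word u"])
      (simp add: degree_le_emb_mult_word ideal_gen.gen[OF lie_relator_vbasis, of 1, simplified])
  ultimately show ?case
    using degree_le_mod_add degree_le_mod_word_mult[OF Cons] by fastforce
qed

lemma commutator_degree_le_mod:
  fixes br :: "('i::finite \<Rightarrow> 'k::comm_ring_1) \<Rightarrow> ('i \<Rightarrow> 'k) \<Rightarrow> ('i \<Rightarrow> 'k)"
  assumes "degree_le n P"
  shows "degree_le_mod n (lie_relators br) (emb y * P - P * emb y)"
proof -
  have "emb y * P - P * emb y = lin_ext (\<lambda>w. emb y * word w - word w * emb y) P"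
  proof (rule additive_eqI[where P = P])
    fix w :: "'i list" and c :: 'k
    have "single w c = scalar c * word w" by (simp add: scalar_mult_single)
    then show "emb y * single w c - single w c * emb y
        = lin_ext (\<lambda>w. emb y * word w - word w * emb y) (single w c)"
      by (simp add: mult_scalar_left_commute mult.assoc right_diff_distrib lin_ext_scalar)
  qed (simp_all add: lin_ext_add algebra_simps)
  also have "degree_le_mod n (lie_relators br) \<dots>"
  proof (rule degree_le_mod_lin_ext)
    fix w assume "w \<in> keys P"
    then have "length w \<le> n" using assms by (simp add: degree_le_def)
    then show "degree_le_mod n (lie_relators br) (emb y * word w - word w * emb y)"
      by (rule degree_le_mod_mono[OF commutator_word_degree_le_mod])
  qed
  finally show ?thesis .
qed

lemma degree_le_twisted_act: "degree_le n Q \<Longrightarrow> degree_le (Suc n) (twisted_act R v Q)"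
  unfolding twisted_act_def
  using degree_le_mult[OF degree_le_emb, of n Q "R_plus R v"] degree_le_mult[OF _ degree_le_emb, of n Q "R_minus R v"]
  by (auto intro: degree_le_diff)

lemma degree_le_factor_word: "degree_le (length w) (factor_word R w)"
  by (induct w) (simp_all add: factor_word_Cons degree_le_twisted_act degree_le_single flip: word_Nil)

text \<open>Since \<open>R\<^sub>+ - R\<^sub>- = id\<close>, each step \<open>Q \<mapsto> R\<^sub>+(e\<^sub>i) Q - Q R\<^sub>-(e\<^sub>i)\<close> equals left
  multiplication by \<open>e\<^sub>i\<close> plus a commutator, which lowers the degree modulo the ideal.\<close>

lemma factor_word_leading:
  fixes br :: "('i::finite \<Rightarrow> 'k::field_char_0) \<Rightarrow> ('i \<Rightarrow> 'k) \<Rightarrow> ('i \<Rightarrow> 'k)"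
  shows "\<exists>r. degree_lt (length w) r \<and> factor_word R w - word w - r \<in> ideal_gen (lie_relators br)"
proof (induct w)
  case Nil
  show ?case by (intro exI[of _ 0]) (simp add: word_Nil ideal_gen.zero)
next
  case (Cons i w)
  obtain r where r: "degree_lt (length w) r" "factor_word R w - word w - r \<in> ideal_gen (lie_relators br)"
    using Cons by blast
  let ?P = "factor_word R w" and ?m = "emb (R_minus R (vbasis i))"
  obtain r' where r': "degree_le (length w) r'" "?m * ?P - ?P * ?m - r' \<in> ideal_gen (lie_relators br)"
    using commutator_degree_le_mod[OF degree_le_factor_word, where br = br and y = "R_minus R (vbasis i)"]
    by (auto simp: degree_le_mod_def)
  have "factor_word R (i # w) - word (i # w) - (word [i] * r + r')
      = word [i] * (?P - word w - r) + (?m * ?P - ?P * ?m - r')"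
    by (simp add: factor_word_Cons twisted_act_def R_plus_eq_R_minus_add emb_add emb_vbasis algebra_simps
        single_mult_single)
  moreover have "\<dots> \<in> ideal_gen (lie_relators br)"
    by (rule ideal_gen.add[OF ideal_gen_mult_left[OF r(2)] r'(2)])
  moreover have "degree_lt (length (i # w)) (word [i] * r + r')"
    using degree_lt_word_mult[OF r(1)] r'(1) by (auto intro: degree_lt_add simp flip: degree_lt_Suc)
  ultimately show ?case by metis
qed

lemma factor_leading:
  fixes br :: "('i::finite \<Rightarrow> 'k::field_char_0) \<Rightarrow> ('i \<Rightarrow> 'k) \<Rightarrow> ('i \<Rightarrow> 'k)"
  assumes "degree_le n s"
  shows "\<exists>t. degree_lt n t \<and> factor R s - s - t \<in> ideal_gen (lie_relators br)"
proof -
  obtain r where r: "\<And>w. degree_lt (length w) (r w)"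
    "\<And>w. factor_word R w - word w - r w \<in> ideal_gen (lie_relators br)"
    using factor_word_leading[where br = br and R = R] by metis
  have "factor R s - s - lin_ext r s = lin_ext (\<lambda>w. factor_word R w - word w - r w) s"
    by (simp add: factor_def lin_ext_fun_diff)
  moreover have "\<dots> \<in> ideal_gen (lie_relators br)"
    by (rule ideal_gen_lin_ext) (rule r(2))
  moreover have "degree_lt n (lin_ext r s)"
    using r(1) assms by (intro degree_lt_lin_ext) (auto simp: degree_le_def intro: degree_lt_mono)
  ultimately show ?thesis by metis
qed

lemma factor_diff: "factor R (P - Q) = factor R P - factor R Q"
  by (simp add: factor_def lin_ext_diff)

lemma factor_surjective:
  fixes br :: "('i::finite \<Rightarrow> 'k::field_char_0) \<Rightarrow> ('i \<Rightarrow> 'k) \<Rightarrow> ('i \<Rightarrow> 'k)"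
  shows "\<exists>A. factor R A - P \<in> ideal_gen (lie_relators br)"
proof -
  obtain n where "degree_le n P" using degree_le_exists by blast
  then show ?thesis
  proof (induct n arbitrary: P)
    case 0
    then obtain t where "degree_lt 0 t" "factor R P - P - t \<in> ideal_gen (lie_relators br)"
      using factor_leading by blast
    then show ?case by (auto simp: degree_lt_0)
  next
    case (Suc n)
    then obtain t where t: "degree_le n t" "factor R P - P - t \<in> ideal_gen (lie_relators br)"
      using factor_leading by (metis degree_lt_Suc)
    obtain B where "factor R B - t \<in> ideal_gen (lie_relators br)" using Suc.hyps[OF t(1)] by blast
    with t(2) have "factor R (P - B) - P \<in> ideal_gen (lie_relators br)"
      using ideal_gen_diff by (fastforce simp: factor_diff algebra_simps)
    then show ?case by blast
  qed
qed

lemma factor_sorted_ideal_eq_0: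
  fixes br :: "('i::finite \<Rightarrow> 'k::field_char_0) \<Rightarrow> ('i \<Rightarrow> 'k) \<Rightarrow> ('i \<Rightarrow> 'k)"
  assumes "lie_bracket br"
  shows "sorted_keys s \<Longrightarrow> degree_le n s \<Longrightarrow> factor R s \<in> ideal_gen (lie_relators br) \<Longrightarrow> s = 0"
proof (induct n arbitrary: s)
  interpret pbw_lie br by unfold_locales (rule assms)
  case 0
  then obtain t where "degree_lt 0 t" "factor R s - s - t \<in> ideal_gen (lie_relators br)"
    using factor_leading by blast
  then have "s \<in> ideal_gen (lie_relators br)"
    using ideal_gen_diff[OF \<open>factor R s \<in> _\<close>] by (fastforce simp: degree_lt_0)
  then show ?case using sorted_keys_ideal_eq_0 \<open>sorted_keys s\<close> by blast
next
  interpret pbw_lie br by unfold_locales (rule assms)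
  case (Suc n)
  then obtain t where t: "degree_le n t" "factor R s - s - t \<in> ideal_gen (lie_relators br)"
    using factor_leading by (metis degree_lt_Suc)
  then obtain t' where t': "sorted_keys t'" "degree_le n t'" "t - t' \<in> ideal_gen (lie_relators br)"
    using sorted_rep_exists[OF t(1), of br] by (auto simp: sorted_rep_def)
  have "s + t' = factor R s - (factor R s - s - t) - (t - t')" by (simp add: algebra_simps)
  also have "\<dots> \<in> ideal_gen (lie_relators br)"
    by (rule ideal_gen_diff[OF ideal_gen_diff[OF Suc.prems(3) t(2)] t'(3)])
  finally have "s + t' \<in> ideal_gen (lie_relators br)" .
  then have "s = - t'"
    using sorted_keys_ideal_eq_0 sorted_keys_add[OF Suc.prems(1) t'(1)] by (simp add: eq_neg_iff_add_eq_0)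
  then show ?case using Suc.hyps[of s] Suc.prems t'(2) by simp
qed

lemma factor_injective:
  fixes br :: "('i::finite \<Rightarrow> 'k::field_char_0) \<Rightarrow> ('i \<Rightarrow> 'k) \<Rightarrow> ('i \<Rightarrow> 'k)"
  assumes lb: "lie_bracket br" and cr: "classical_r_matrix br R"
    and "factor R B \<in> ideal_gen (lie_relators br)"
  shows "B \<in> ideal_gen (lie_relators (bracket_R br R))"
proof -
  obtain n where "degree_le n B" using degree_le_exists by blast
  then obtain s where s: "sorted_keys s" "degree_le n s" "B - s \<in> ideal_gen (lie_relators (bracket_R br R))"
    using sorted_rep_exists[of n B "bracket_R br R"] by (auto simp: sorted_rep_def)
  have "factor R s = factor R B - factor R (B - s)" by (simp add: factor_diff)
  then have "factor R s \<in> ideal_gen (lie_relators br)"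
    using ideal_gen_diff[OF assms(3) factor_ideal[OF lb cr s(3)]] by simp
  then have "s = 0" by (rule factor_sorted_ideal_eq_0[OF lb s(1,2)])
  then show ?thesis using s(3) by simp
qed

section \<open>The function representation of \<open>T(V)\<close>\<close>

lemma fsupp_lookup [simp]: "fsupp (lookup P)"
  by (simp add: fsupp_def)

lemma lookup_Abs_poly_mapping_fsupp [simp]: "fsupp p \<Longrightarrow> lookup (Abs_poly_mapping p) = p"
  by (simp add: fsupp_def)

lemma fa_mult_lookup_single:
  "fa_mult (lookup (single u a)) q = (\<lambda>w. if take (length u) w = u then a * q (drop (length u) w) else 0)"
proof
  fix w
  have "fa_mult (lookup (single u a)) q w
      = (\<Sum>k\<le>length w. if k = length u \<and> take k w = u then a * q (drop k w) else 0)"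
    unfolding fa_mult_def by (rule sum.cong) (auto simp: lookup_single when_def)
  also have "\<dots> = (if take (length u) w = u then a * q (drop (length u) w) else 0)"
  proof (cases "take (length u) w = u")
    case True
    then have "length u \<le> length w" by (metis append_take_drop_id le_add1 length_append)
    with True show ?thesis by (simp add: sum.delta cong: conj_cong)
  qed (auto intro: sum.neutral)
  finally show "fa_mult (lookup (single u a)) q w = (if take (length u) w = u then a * q (drop (length u) w) else 0)" .
qed

lemma lookup_single_mult:
  fixes Q :: "'i list \<Rightarrow>\<^sub>0 'k::comm_ring_1"
  shows "lookup (single u a * Q) = (\<lambda>w. if take (length u) w = u then a * lookup Q (drop (length u) w) else 0)"
proof (rule additive_eqI[where P = Q])
  fix v b
  show "lookup (single u a * single v b) =
      (\<lambda>w. if take (length u) w = u then a * lookup (single v b) (drop (length u) w) else 0)"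
    by (rule ext) (auto simp: single_mult_single lookup_single when_def append_eq_conv_conj)
qed (auto simp: distrib_left lookup_add fun_eq_iff)

lemma fa_mult_lookup: "fa_mult (lookup P) (lookup Q) = lookup (P * (Q::'i list \<Rightarrow>\<^sub>0 'k::comm_ring_1))"
proof (rule additive_eqI[where P = P])
  fix u a
  show "fa_mult (lookup (single u a)) (lookup Q) = lookup (single u a * Q)"
    by (simp add: fa_mult_lookup_single lookup_single_mult)
qed (auto simp: fa_mult_def lookup_add distrib_right sum.distrib fun_eq_iff)

lemma fa_one_lookup: "fa_one = lookup (1 :: 'i list \<Rightarrow>\<^sub>0 'k::comm_ring_1)"
  by (auto simp: fa_one_def lookup_one zero_list_def fun_eq_iff)

lemma fa_emb_lookup: "fa_emb v = lookup (emb v)"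
  by (auto simp: emb_def lookup_sum lookup_single when_def fa_emb_def fun_eq_iff split: list.split)

lemma fa_add_lookup: "fa_add (lookup P) (lookup Q) = lookup (P + Q)"
  by (simp add: fa_add_def fun_eq_iff lookup_add)

lemma fa_diff_lookup: "fa_diff (lookup P) (lookup Q) = lookup (P - Q)"
  by (simp add: fa_diff_def fun_eq_iff lookup_minus)

lemma lie_rel_eq: "lie_rel br = lookup ` lie_relators br"
  unfolding lie_rel_def lie_relators_def by (auto simp: fa_emb_lookup fa_mult_lookup fa_diff_lookup)

lemma fa_ideal_lookup_imp: "p \<in> fa_ideal (lookup ` H) \<Longrightarrow> fsupp p \<and> Abs_poly_mapping p \<in> ideal_gen H"
proof (induct rule: fa_ideal.induct)
  case zero
  then show ?case by (simp add: fsupp_def ideal_gen.zero)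
next
  case (gen g a b)
  then obtain h where h: "h \<in> H" "g = lookup h" by blast
  then have "fa_mult (fa_mult a g) b = lookup (Abs_poly_mapping a * h * Abs_poly_mapping b)"
    using gen by (metis fa_mult_lookup lookup_Abs_poly_mapping_fsupp)
  then show ?case using ideal_gen.gen[OF h(1)] by simp
next
  case (add p q)
  then have "fa_add p q = lookup (Abs_poly_mapping p + Abs_poly_mapping q)"
    by (metis fa_add_lookup lookup_Abs_poly_mapping_fsupp)
  then show ?case using add by (simp add: ideal_gen.add)
qed

lemma ideal_gen_imp_fa_ideal: "P \<in> ideal_gen H \<Longrightarrow> lookup P \<in> fa_ideal (lookup ` H)"
proof (induct rule: ideal_gen.induct)
  case zero
  have "lookup 0 = (\<lambda>_. 0)" by (rule ext) (rule lookup_zero)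
  then show ?case by (simp add: fa_ideal.zero)
next
  case (gen g a b)
  then show ?case using fa_ideal.gen[of "lookup g" "lookup ` H" "lookup a" "lookup b"]
    by (simp add: fa_mult_lookup)
next
  case (add p q)
  then show ?case using fa_ideal.add by (metis fa_add_lookup)
qed

lemma ueq_iff_ideal_gen:
  assumes "fsupp p" "fsupp q"
  shows "ueq br p q \<longleftrightarrow> Abs_poly_mapping p - Abs_poly_mapping q \<in> ideal_gen (lie_relators br)"
proof -
  have "fa_diff p q = lookup (Abs_poly_mapping p - Abs_poly_mapping q)"
    using fa_diff_lookup[of "Abs_poly_mapping p" "Abs_poly_mapping q"] assms by simp
  then show ?thesis
    unfolding ueq_def lie_rel_eq using fa_ideal_lookup_imp ideal_gen_imp_fa_ideal by fastforce
qed

lemma word_hom_lookup: "word_hom f w = lookup (word_prod f w)"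
  by (induct w) (auto simp: fa_one_lookup fa_emb_lookup fa_mult_lookup)

lemma antipode_lookup: "antipode (lookup P) = lookup (antipode_pm P)"
  by (simp add: antipode_def fun_eq_iff lookup_antipode_pm)

lemma factor_map_eq_factor: "fsupp p \<Longrightarrow> factor_map R p = lookup (factor R (Abs_poly_mapping p))"
  unfolding factor_map_def factor_def lin_ext_def
  by (auto simp: keys_def fsupp_def lookup_sum word_hom_lookup antipode_lookup fa_mult_lookup
      factor_word_def fun_eq_iff)

theorem mainTheorem9:
  fixes br :: "('i::finite \<Rightarrow> 'k::real_normed_field) \<Rightarrow> ('i \<Rightarrow> 'k) \<Rightarrow> ('i \<Rightarrow> 'k)"
    and R :: "('i \<Rightarrow> 'k) \<Rightarrow> ('i \<Rightarrow> 'k)"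
  assumes "lie_bracket br"
    and "classical_r_matrix br R"
    and "fsupp A"
  shows "\<exists>A'. fsupp A' \<and> ueq br (factor_map R A') A \<and>
           (\<forall>A''. fsupp A'' \<and> ueq br (factor_map R A'') A \<longrightarrow> ueq (bracket_R br R) A'' A')"
proof -
  have ueq: "ueq br (factor_map R p) A \<longleftrightarrow>
      factor R (Abs_poly_mapping p) - Abs_poly_mapping A \<in> ideal_gen (lie_relators br)" if "fsupp p" for p
    using that assms(3) by (simp add: factor_map_eq_factor ueq_iff_ideal_gen)
  obtain B where B: "factor R B - Abs_poly_mapping A \<in> ideal_gen (lie_relators br)"
    using factor_surjective by blast
  show ?thesis
  proof (intro exI conjI allI impI)
    show "fsupp (lookup B)" "ueq br (factor_map R (lookup B)) A"
      using B by (simp_all add: ueq)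
  next
    fix A'' assume A'': "fsupp A'' \<and> ueq br (factor_map R A'') A"
    then have "factor R (Abs_poly_mapping A'' - B)
        = (factor R (Abs_poly_mapping A'') - Abs_poly_mapping A) - (factor R B - Abs_poly_mapping A)"
      by (simp add: factor_diff)
    also have "\<dots> \<in> ideal_gen (lie_relators br)"
      using A'' ueq ideal_gen_diff[OF _ B] by blast
    finally have "Abs_poly_mapping A'' - B \<in> ideal_gen (lie_relators (bracket_R br R))"
      by (rule factor_injective[OF assms(1,2)])
    then show "ueq (bracket_R br R) A'' (lookup B)" using A'' by (simp add: ueq_iff_ideal_gen)
  qed
qed

end
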